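(* Let $S$ be an open sector with vertex at $0$ whose closure meets the real axis only at $0$, and let $\varepsilon\in S$. (1) One has $e^x(1+\varepsilon x)*e^x(1+\bar\varepsilon x)=e^xV$, where $V=1+(\varepsilon+\bar\varepsilon+\varepsilon\bar\varepsilon)x+\varepsilon\bar\varepsilon x^2$. (2) If $Y$ is a polynomial of degree $p$, then $(e^xY)*(e^xV)=e^xY_1$, where $Y_1$ is a polynomial of degree $p+2$. (3) Suppose $Y$ is a real polynomial of degree $p$ whose roots are: $s^*$ simple negative roots, $t^*$ simple positive roots, $r^*/2$ pairwise distinct pairs of non-real complex conjugate roots, and a root of multiplicity $p-s^*-t^*-r^*$ at $0$. Then one can choose $\varepsilon\in S$ so close to $0$ that the polynomial $Y_1$ (defined by $(e^xY)*(e^xV)=e^xY_1$) has $s^*$ simple negative roots, $t^*$ simple positive roots, $r^*/2+1$ pairwise distinct pairs of non-real complex conjugate roots, and a root of multiplicity $p-s^*-t^*-r^*$ at $0$.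
   Context: Schur–Szegő composition of entire functions: for $f=\sum_{j\ge0}\gamma_jx^j/j!$ and $g=\sum_{j\ge0}\delta_jx^j/j!$ (everywhere convergent series) one sets $f*g=\sum_{j\ge0}\gamma_j\delta_jx^j/j!$; it is commutative and associative. *)

theory Defs
  imports "HOL-Analysis.Analysis" "HOL-Computational_Algebra.Polynomial"
begin

text \<open>Schur-Szego composition of entire functions: if f = sum gamma_j x^j/j! and
  g = sum delta_j x^j/j!, then gamma_j, delta_j are the j-th derivatives at 0 and
  f * g = sum gamma_j delta_j x^j/j!.\<close>
definition ssc :: "(complex \<Rightarrow> complex) \<Rightarrow> (complex \<Rightarrow> complex) \<Rightarrow> complex \<Rightarrow> complex" where
  "ssc f g = (\<lambda>x. \<Sum>j. (deriv ^^ j) f 0 * (deriv ^^ j) g 0 * x ^ j / fact j)"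

definition open_sector :: "real \<Rightarrow> real \<Rightarrow> complex set" where
  "open_sector \<alpha> \<beta> = {complex_of_real r * cis \<theta> | r \<theta>. 0 < r \<and> \<alpha> < \<theta> \<and> \<theta> < \<beta>}"

definition Vpoly :: "complex \<Rightarrow> complex poly" where
  "Vpoly e = [:1, e + cnj e + e * cnj e, e * cnj e:]"

text \<open>Root configuration of a nonzero polynomial: s simple negative roots, t simple
  positive roots, r simple non-real roots (for real polynomials these form r/2
  pairwise distinct conjugate pairs), and a root of multiplicity m at 0.\<close>
definition root_config :: "complex poly \<Rightarrow> nat \<Rightarrow> nat \<Rightarrow> nat \<Rightarrow> nat \<Rightarrow> bool" where
  "root_config P s t r m \<longleftrightarrow> P \<noteq> 0 \<and>
     card {z. z \<in> \<real> \<and> Re z < 0 \<and> poly P z = 0} = s \<and>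
     card {z. z \<in> \<real> \<and> Re z > 0 \<and> poly P z = 0} = t \<and>
     card {z. z \<notin> \<real> \<and> poly P z = 0} = r \<and>
     (\<forall>z. z \<noteq> 0 \<and> poly P z = 0 \<longrightarrow> order z P = 1) \<and>
     order 0 P = m"

end

theory Submission
  imports Defs "HOL-Complex_Analysis.Complex_Analysis"
    "HOL-Computational_Algebra.Fundamental_Theorem_Algebra"
begin

text \<open>
  Writing e^x P = \<Sum> \<gamma>_j(P) x^j / j!, composing with e^x V multiplies \<gamma>_j by
  1 + j a + j (j - 1) b, where V = [:1, a, b:] with a = \<epsilon> + \<epsilon>' + \<epsilon>\<epsilon>', b = \<epsilon>\<epsilon>' (\<epsilon>' the conjugate).
  On e^x Y this is the Euler operator 1 + a x D + b x^2 D^2, hence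
  Y_1 = Y + a x (Y + Y') + b x^2 (Y + 2 Y' + Y''), of degree p + 2 since b = |\<epsilon>|^2 \<noteq> 0.

  For (3) write Y = x^m Z with Z(0) \<noteq> 0; then Y_1 = x^m Z_1 with Z_1 = Z + O(|\<epsilon>|) on every disc.
  By a Newton argument each (simple) root of Z moves to exactly one nearby simple root of Z_1,
  keeping its sign or non-reality, and Z_1 has no further roots in a large disc. It has no large
  real roots either: for real t, 1 + a t + b t^2 = |1 + \<epsilon> t|^2 + |\<epsilon>|^2 t, and |1 + \<epsilon> t| stays
  comparable to 1 + |\<epsilon> t| because \<epsilon> lies in a sector avoiding the real axis. As Z_1 is real
  and has two more roots than Z, the two new roots form a single non-real conjugate pair.
\<close>

section \<open>Composition with e^x times a polynomial\<close>

definition exp_deriv :: "complex poly \<Rightarrow> complex poly" where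
  "exp_deriv Q = Q + pderiv Q"

text \<open>The coefficient \<gamma>_j of e^x Q = \<Sum> \<gamma>_j x^j / j!, i.e. the j-th derivative of e^x Q at 0.\<close>

definition exp_taylor :: "complex poly \<Rightarrow> nat \<Rightarrow> complex" where
  "exp_taylor Q j = poly ((exp_deriv ^^ j) Q) 0"

lemma deriv_exp_poly: "deriv (\<lambda>x. exp x * poly Q x) = (\<lambda>x. exp x * poly (exp_deriv Q) x)"
proof
  fix x :: complex
  have "((\<lambda>x. exp x * poly Q x) has_field_derivative exp x * poly (exp_deriv Q) x) (at x)"
    by (auto intro!: derivative_eq_intros simp: exp_deriv_def algebra_simps)
  then show "deriv (\<lambda>x. exp x * poly Q x) x = exp x * poly (exp_deriv Q) x"
    by (rule DERIV_imp_deriv)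
qed

lemma higher_deriv_exp_poly:
  "(deriv ^^ j) (\<lambda>x. exp x * poly Q x) = (\<lambda>x. exp x * poly ((exp_deriv ^^ j) Q) x)"
  by (induction j) (simp_all add: deriv_exp_poly)

lemma exp_poly_sums: "(\<lambda>j. exp_taylor Q j * x ^ j / fact j) sums (exp x * poly Q x)"
proof -
  have "(\<lambda>x. exp x * poly Q x) holomorphic_on ball 0 (norm x + 1)"
    by (intro holomorphic_intros)
  from holomorphic_power_series[OF this, of x] show ?thesis
    by (simp add: higher_deriv_exp_poly exp_taylor_def)
qed

lemma exp_poly_eq_iff:
  fixes P Q :: "complex poly"
  shows "(\<lambda>x. exp x * poly P x) = (\<lambda>x. exp x * poly Q x) \<longleftrightarrow> P = Q"
proof
  assume h: "(\<lambda>x. exp x * poly P x) = (\<lambda>x. exp x * poly Q x)"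
  have "poly P x = poly Q x" for x
    using fun_cong[OF h, of x] by simp
  then show "P = Q" by (simp add: poly_eq_poly_eq_iff[symmetric] fun_eq_iff)
qed simp

lemma ssc_exp_poly:
  assumes "\<And>j. exp_taylor R j = exp_taylor P j * exp_taylor Q j"
  shows "ssc (\<lambda>x. exp x * poly P x) (\<lambda>x. exp x * poly Q x) = (\<lambda>x. exp x * poly R x)"
proof
  fix x
  show "ssc (\<lambda>x. exp x * poly P x) (\<lambda>x. exp x * poly Q x) x = exp x * poly R x"
    using sums_unique[OF exp_poly_sums[of R x]]
    by (simp add: ssc_def higher_deriv_exp_poly exp_taylor_def[symmetric] assms)
qed

lemma exp_deriv_add: "exp_deriv (P + Q) = exp_deriv P + exp_deriv Q"
  by (simp add: exp_deriv_def pderiv_add)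

lemma exp_deriv_smult: "exp_deriv (smult c P) = smult c (exp_deriv P)"
  by (simp add: exp_deriv_def pderiv_smult smult_add_right)

lemma exp_deriv_pCons0: "exp_deriv (pCons 0 W) = pCons 0 (exp_deriv W) + W"
  by (simp add: exp_deriv_def pderiv_pCons)

lemma exp_taylor_add: "exp_taylor (P + Q) j = exp_taylor P j + exp_taylor Q j"
proof -
  have "(exp_deriv ^^ j) (P + Q) = (exp_deriv ^^ j) P + (exp_deriv ^^ j) Q"
    by (induction j) (simp_all add: exp_deriv_add)
  then show ?thesis by (simp add: exp_taylor_def)
qed

lemma exp_taylor_smult: "exp_taylor (smult c P) j = c * exp_taylor P j"
proof -
  have "(exp_deriv ^^ j) (smult c P) = smult c ((exp_deriv ^^ j) P)"
    by (induction j) (simp_all add: exp_deriv_smult)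
  then show ?thesis by (simp add: exp_taylor_def)
qed

lemma exp_taylor_exp_deriv: "exp_taylor (exp_deriv P) j = exp_taylor P (Suc j)"
  by (simp add: exp_taylor_def funpow_Suc_right del: funpow.simps)

lemma funpow_exp_deriv_pCons0:
  "(exp_deriv ^^ Suc j) (pCons 0 W)
     = pCons 0 ((exp_deriv ^^ Suc j) W) + smult (of_nat (Suc j)) ((exp_deriv ^^ j) W)"
proof (induction j)
  case 0
  then show ?case by (simp add: exp_deriv_pCons0)
next
  case (Suc j)
  let ?E = "\<lambda>k. (exp_deriv ^^ k) W"
  have "(exp_deriv ^^ Suc (Suc j)) (pCons 0 W)
      = exp_deriv (pCons 0 (?E (Suc j)) + smult (of_nat (Suc j)) (?E j))"
    using Suc by simp
  also have "\<dots> = pCons 0 (?E (Suc (Suc j))) + ?E (Suc j) + smult (of_nat (Suc j)) (?E (Suc j))"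
    by (simp add: exp_deriv_add exp_deriv_pCons0 exp_deriv_smult)
  also have "\<dots> = pCons 0 (?E (Suc (Suc j))) + smult (of_nat (Suc (Suc j))) (?E (Suc j))"
    by (simp add: smult_add_left add.assoc numeral_mult_conv_smult)
  finally show ?case .
qed

lemma exp_taylor_pCons0: "exp_taylor (pCons 0 W) j = of_nat j * exp_taylor W (j - 1)"
  by (cases j) (simp_all add: exp_taylor_def funpow_exp_deriv_pCons0 del: funpow.simps)

lemma exp_taylor_quadratic:
  "exp_taylor [:u, v, w:] j = u + of_nat j * v + of_nat j * (of_nat j - 1) * w"
proof -
  have "(exp_deriv ^^ j) [:u, v, w:]
      = [:u + of_nat j * v + of_nat j * (of_nat j - 1) * w, v + 2 * of_nat j * w, w:]"
    by (induction j arbitrary: u v) (simp_all add: exp_deriv_def pderiv_pCons algebra_simps)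
  then show ?thesis by (simp add: exp_taylor_def)
qed

text \<open>exp_euler1 Y and exp_euler2 Y are e^(-x) x D (e^x Y) and e^(-x) x^2 D^2 (e^x Y); they multiply
  \<gamma>_j by j and by j (j - 1), so composing e^x Y with e^x [:1, a, b:] yields e^x (ssc_quad Y a b).\<close>

definition exp_euler1 :: "complex poly \<Rightarrow> complex poly" where
  "exp_euler1 Y = pCons 0 (exp_deriv Y)"

definition exp_euler2 :: "complex poly \<Rightarrow> complex poly" where
  "exp_euler2 Y = pCons 0 (pCons 0 (exp_deriv (exp_deriv Y)))"

definition ssc_quad :: "complex poly \<Rightarrow> complex \<Rightarrow> complex \<Rightarrow> complex poly" where
  "ssc_quad Y a b = Y + smult a (exp_euler1 Y) + smult b (exp_euler2 Y)"

lemma exp_taylor_exp_euler1: "exp_taylor (exp_euler1 Y) j = of_nat j * exp_taylor Y j"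
  by (cases j) (simp_all add: exp_euler1_def exp_taylor_pCons0 exp_taylor_exp_deriv)

lemma exp_taylor_exp_euler2:
  "exp_taylor (exp_euler2 Y) j = of_nat j * (of_nat j - 1) * exp_taylor Y j"
  by (cases j; cases "j - 1")
    (simp_all add: exp_euler2_def exp_taylor_pCons0 exp_taylor_exp_deriv)

lemma exp_taylor_ssc_quad:
  "exp_taylor (ssc_quad Y a b) j = exp_taylor Y j * exp_taylor [:1, a, b:] j"
  by (simp add: ssc_quad_def exp_taylor_add exp_taylor_smult exp_taylor_exp_euler1
      exp_taylor_exp_euler2 exp_taylor_quadratic algebra_simps)

lemma ssc_exp_quad:
  "ssc (\<lambda>x. exp x * poly Y x) (\<lambda>x. exp x * poly [:1, a, b:] x)
     = (\<lambda>x. exp x * poly (ssc_quad Y a b) x)"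
  by (rule ssc_exp_poly) (simp add: exp_taylor_ssc_quad)

lemma exp_taylor_linear: "exp_taylor [:u, v:] j = u + of_nat j * v"
  using exp_taylor_quadratic[of u v 0 j] by simp

lemma ssc_exp_linear:
  "ssc (\<lambda>x. exp x * (1 + u * x)) (\<lambda>x. exp x * (1 + v * x))
     = (\<lambda>x. exp x * poly [:1, u + v + u * v, u * v:] x)"
proof -
  have "ssc (\<lambda>x. exp x * poly [:1, u:] x) (\<lambda>x. exp x * poly [:1, v:] x)
      = (\<lambda>x. exp x * poly [:1, u + v + u * v, u * v:] x)"
    by (rule ssc_exp_poly) (simp add: exp_taylor_linear exp_taylor_quadratic algebra_simps)
  then show ?thesis by (simp add: mult.commute)
qed

lemma coeff_exp_deriv: "coeff (exp_deriv Y) n = coeff Y n + of_nat (Suc n) * coeff Y (Suc n)"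
  by (simp add: exp_deriv_def coeff_pderiv algebra_simps)

lemma degree_exp_deriv: "degree (exp_deriv Y) = degree Y"
  and lead_coeff_exp_deriv: "lead_coeff (exp_deriv Y) = lead_coeff Y"
proof -
  have lc: "coeff (exp_deriv Y) (degree Y) = lead_coeff Y"
    by (simp add: coeff_exp_deriv coeff_eq_0)
  show "degree (exp_deriv Y) = degree Y"
  proof (cases "Y = 0")
    case False
    show ?thesis
    proof (rule antisym)
      show "degree (exp_deriv Y) \<le> degree Y"
        by (rule degree_le) (simp add: coeff_exp_deriv coeff_eq_0)
      show "degree Y \<le> degree (exp_deriv Y)"
        by (rule le_degree) (simp add: lc False)
    qed
  qed (simp add: exp_deriv_def)
  with lc show "lead_coeff (exp_deriv Y) = lead_coeff Y" by simp
qed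

lemma degree_ssc_quad:
  assumes "Y \<noteq> 0" "b \<noteq> 0"
  shows "degree (ssc_quad Y a b) = degree Y + 2"
proof -
  let ?p = "degree Y"
  have coeff: "coeff (ssc_quad Y a b) n = coeff Y n + a * coeff (exp_euler1 Y) n
      + b * coeff (exp_euler2 Y) n" for n
    by (simp add: ssc_quad_def)
  show ?thesis
  proof (rule antisym)
    show "degree (ssc_quad Y a b) \<le> ?p + 2"
      by (rule degree_le) (auto simp: coeff coeff_eq_0 exp_euler1_def exp_euler2_def
          coeff_pCons degree_exp_deriv split: nat.split)
    have "coeff (exp_deriv (exp_deriv Y)) ?p = lead_coeff Y"
      using lead_coeff_exp_deriv[of Y] lead_coeff_exp_deriv[of "exp_deriv Y"]
      by (simp add: degree_exp_deriv)
    then have "coeff (ssc_quad Y a b) (?p + 2) = b * lead_coeff Y"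
      by (simp add: coeff coeff_eq_0 exp_euler1_def exp_euler2_def degree_exp_deriv)
    then show "?p + 2 \<le> degree (ssc_quad Y a b)"
      using assms by (intro le_degree) simp
  qed
qed

lemma exp_euler1_pCons0: "exp_euler1 (pCons 0 W) = pCons 0 (exp_euler1 W + W)"
  by (simp add: exp_euler1_def exp_deriv_pCons0)

lemma exp_euler2_pCons0: "exp_euler2 (pCons 0 W) = pCons 0 (exp_euler2 W + 2 * exp_euler1 W)"
  by (simp add: exp_euler1_def exp_euler2_def exp_deriv_pCons0 exp_deriv_add mult_2
      numeral_mult_conv_smult del: mult_pCons_left)

lemma monom_Suc_mult:
  fixes Z :: "'a :: comm_semiring_1 poly"
  shows "[:0, 1:] ^ Suc m * Z = pCons 0 ([:0, 1:] ^ m * Z)"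
  by (simp add: mult.assoc)

lemma exp_euler1_monom_mult:
  "exp_euler1 ([:0, 1:] ^ m * Z) = [:0, 1:] ^ m * (exp_euler1 Z + of_nat m * Z)"
proof (induction m)
  case (Suc m)
  then have "exp_euler1 ([:0, 1:] ^ Suc m * Z)
      = pCons 0 ([:0, 1:] ^ m * (exp_euler1 Z + of_nat m * Z) + [:0, 1:] ^ m * Z)"
    by (simp only: monom_Suc_mult exp_euler1_pCons0)
  also have "\<dots> = pCons 0 ([:0, 1:] ^ m * (exp_euler1 Z + of_nat (Suc m) * Z))"
    by (simp add: algebra_simps del: mult_pCons_left mult_pCons_right)
  finally show ?case
    by (simp only: monom_Suc_mult)
qed simp

lemma exp_euler2_monom_mult:
  "exp_euler2 ([:0, 1:] ^ m * Z)
     = [:0, 1:] ^ m * (exp_euler2 Z + 2 * of_nat m * exp_euler1 Z + of_nat m * (of_nat m - 1) * Z)"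
proof (induction m)
  case (Suc m)
  then have "exp_euler2 ([:0, 1:] ^ Suc m * Z)
      = pCons 0 ([:0, 1:] ^ m * (exp_euler2 Z + 2 * of_nat m * exp_euler1 Z
          + of_nat m * (of_nat m - 1) * Z) + 2 * ([:0, 1:] ^ m * (exp_euler1 Z + of_nat m * Z)))"
    by (simp only: monom_Suc_mult exp_euler2_pCons0 exp_euler1_monom_mult)
  also have "\<dots> = pCons 0 ([:0, 1:] ^ m * (exp_euler2 Z + 2 * of_nat (Suc m) * exp_euler1 Z
      + of_nat (Suc m) * (of_nat (Suc m) - 1) * Z))"
    by (simp add: algebra_simps del: mult_pCons_left mult_pCons_right)
  finally show ?case
    by (simp only: monom_Suc_mult)
qed simp

lemma ssc_quad_monom_mult:
  "ssc_quad ([:0, 1:] ^ m * Z) a b = [:0, 1:] ^ m * (Z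
     + smult a (exp_euler1 Z + of_nat m * Z)
     + smult b (exp_euler2 Z + 2 * of_nat m * exp_euler1 Z + of_nat m * (of_nat m - 1) * Z))"
  unfolding ssc_quad_def exp_euler1_monom_mult exp_euler2_monom_mult
  by (simp add: algebra_simps del: mult_pCons_left mult_pCons_right)

lemma real_coeffs_ssc_quad:
  assumes "\<And>n. coeff Y n \<in> \<real>" "a \<in> \<real>" "b \<in> \<real>"
  shows "coeff (ssc_quad Y a b) n \<in> \<real>"
proof -
  have real_exp_deriv: "coeff (exp_deriv Q) k \<in> \<real>" if "\<And>n. coeff Q n \<in> \<real>" for Q k
    unfolding coeff_exp_deriv by (intro Reals_add Reals_mult Reals_of_nat that)
  have E1: "coeff (exp_deriv Y) k \<in> \<real>" for k
    by (rule real_exp_deriv[OF assms(1)])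
  have E2: "coeff (exp_deriv (exp_deriv Y)) k \<in> \<real>" for k
    by (rule real_exp_deriv[OF E1])
  have euler1: "coeff (exp_euler1 Y) n \<in> \<real>"
    by (cases n) (simp_all add: exp_euler1_def E1)
  have euler2: "coeff (exp_euler2 Y) n \<in> \<real>"
    by (cases n; cases "n - 1") (simp_all add: exp_euler2_def E2)
  have "coeff (ssc_quad Y a b) n
      = coeff Y n + a * coeff (exp_euler1 Y) n + b * coeff (exp_euler2 Y) n"
    by (simp add: ssc_quad_def)
  then show ?thesis
    using assms euler1 euler2 by (simp only: Reals_add Reals_mult)
qed

section \<open>The composed polynomial has no large real roots\<close>

text \<open>The arc cis [\<alpha>, \<beta>] lies in the closure of the sector, hence off the real axis, so |sin| has
  a positive minimum on [\<alpha>, \<beta>].\<close>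

lemma open_sector_Im_bound:
  assumes "\<alpha> < \<beta>" and closure_Reals: "closure (open_sector \<alpha> \<beta>) \<inter> \<real> = {0}"
  shows "\<exists>\<sigma>>0. \<forall>e\<in>open_sector \<alpha> \<beta>. e \<noteq> 0 \<and> \<sigma> * norm e \<le> \<bar>Im e\<bar>"
proof -
  have "cis ` {\<alpha><..<\<beta>} \<subseteq> closure (open_sector \<alpha> \<beta>)"
  proof
    fix z assume "z \<in> cis ` {\<alpha><..<\<beta>}"
    then obtain \<theta> where "z = cis \<theta>" "\<alpha> < \<theta>" "\<theta> < \<beta>" by auto
    then have "z \<in> open_sector \<alpha> \<beta>"
      unfolding open_sector_def by (intro CollectI exI[of _ 1] exI[of _ \<theta>]) auto
    then show "z \<in> closure (open_sector \<alpha> \<beta>)" by (rule closure_subset[THEN subsetD])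
  qed
  then have "cis ` closure {\<alpha><..<\<beta>} \<subseteq> closure (open_sector \<alpha> \<beta>)"
    by (intro image_closure_subset) (auto intro!: continuous_intros)
  then have cis_closure: "cis \<theta> \<in> closure (open_sector \<alpha> \<beta>)" if "\<theta> \<in> {\<alpha>..\<beta>}" for \<theta>
    using assms(1) that by auto
  have sin_nonzero: "sin \<theta> \<noteq> 0" if "\<theta> \<in> {\<alpha>..\<beta>}" for \<theta>
  proof
    assume "sin \<theta> = 0"
    then have "cis \<theta> \<in> \<real>" by (simp add: complex_is_Real_iff)
    with cis_closure[OF that] closure_Reals have "cis \<theta> = 0" by blast
    then show False by simp
  qed
  have cont: "continuous_on {\<alpha>..\<beta>} (\<lambda>\<theta>. \<bar>sin \<theta>\<bar>)"
    by (intro continuous_intros)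
  obtain \<theta>0 where \<theta>0: "\<theta>0 \<in> {\<alpha>..\<beta>}" "\<forall>\<theta>\<in>{\<alpha>..\<beta>}. \<bar>sin \<theta>0\<bar> \<le> \<bar>sin \<theta>\<bar>"
    using continuous_attains_inf[OF compact_Icc _ cont] assms(1) by auto
  have pos: "\<bar>sin \<theta>0\<bar> > 0"
    using sin_nonzero[OF \<theta>0(1)] by simp
  show ?thesis
  proof (intro exI[of _ "\<bar>sin \<theta>0\<bar>"] conjI[OF pos] ballI)
    fix e assume "e \<in> open_sector \<alpha> \<beta>"
    then obtain r \<theta> where e: "e = complex_of_real r * cis \<theta>" "0 < r" "\<alpha> < \<theta>" "\<theta> < \<beta>"
      unfolding open_sector_def by auto
    then have "\<bar>sin \<theta>0\<bar> * r \<le> \<bar>sin \<theta>\<bar> * r"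
      using \<theta>0(2) by (intro mult_right_mono) auto
    then show "e \<noteq> 0 \<and> \<bar>sin \<theta>0\<bar> * norm e \<le> \<bar>Im e\<bar>"
      using e by (auto simp: norm_mult abs_mult mult.commute)
  qed
qed

lemma sector_line_norm_lower:
  fixes e :: complex and \<sigma> t :: real
  assumes "e \<noteq> 0" "\<sigma> * norm e \<le> \<bar>Im e\<bar>"
  shows "\<sigma> \<le> norm (1 + e * of_real t)" and "\<sigma> * (norm e * \<bar>t\<bar>) \<le> norm (1 + e * of_real t)"
proof -
  have "Im ((1 + e * of_real t) * cnj e) = - Im e"
    by (simp add: algebra_simps)
  then have "\<bar>Im e\<bar> \<le> norm (1 + e * of_real t) * norm e"
    using abs_Im_le_cmod[of "(1 + e * of_real t) * cnj e"] by (simp add: norm_mult)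
  with assms have "\<sigma> * norm e \<le> norm (1 + e * of_real t) * norm e"
    by linarith
  with assms(1) show "\<sigma> \<le> norm (1 + e * of_real t)"
    by simp
  have "\<bar>Im e\<bar> * \<bar>t\<bar> \<le> norm (1 + e * of_real t)"
    using abs_Im_le_cmod[of "1 + e * of_real t"] by (simp add: abs_mult)
  moreover have "\<sigma> * norm e * \<bar>t\<bar> \<le> \<bar>Im e\<bar> * \<bar>t\<bar>"
    using assms(2) by (rule mult_right_mono) simp
  ultimately show "\<sigma> * (norm e * \<bar>t\<bar>) \<le> norm (1 + e * of_real t)"
    by (simp add: mult.assoc)
qed

lemma sector_quadratic_dominates:
  fixes \<epsilon> \<sigma> K N t :: real
  assumes "0 < \<epsilon>" "0 \<le> K" "0 \<le> \<sigma>" "\<epsilon> * (1 + 10 * K) < \<sigma>\<^sup>2"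
    and "\<sigma> \<le> N" "\<sigma> * (\<epsilon> * \<bar>t\<bar>) \<le> N"
  shows "\<epsilon>\<^sup>2 * \<bar>t\<bar> * (1 + 2 * K) + 4 * K * \<epsilon> < N\<^sup>2"
proof -
  define L where "L = 1 + (\<epsilon> * \<bar>t\<bar>)\<^sup>2"
  have "\<sigma>\<^sup>2 \<le> N\<^sup>2" "(\<sigma> * (\<epsilon> * \<bar>t\<bar>))\<^sup>2 \<le> N\<^sup>2"
    using assms(1,3,5,6) by (auto intro!: power_mono)
  then have "\<sigma>\<^sup>2 * L \<le> 2 * N\<^sup>2"
    by (simp add: L_def power_mult_distrib algebra_simps)
  moreover have "\<epsilon> * \<bar>t\<bar> \<le> L / 2"
    using sum_squares_bound[of 1 "\<epsilon> * \<bar>t\<bar>"] by (simp add: L_def power2_eq_square)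
  then have "\<epsilon> * (\<epsilon> * \<bar>t\<bar>) * (1 + 2 * K) \<le> \<epsilon> * (L / 2) * (1 + 2 * K)"
    using assms(1,2) by (intro mult_right_mono mult_left_mono) auto
  then have "\<epsilon>\<^sup>2 * \<bar>t\<bar> * (1 + 2 * K) \<le> \<epsilon> * (L / 2) * (1 + 2 * K)"
    by (simp add: power2_eq_square mult.assoc)
  moreover have "4 * K * \<epsilon> * 1 \<le> 4 * K * \<epsilon> * L"
    using assms(1,2) by (intro mult_left_mono) (auto simp: L_def)
  moreover have "\<epsilon> * (1 + 10 * K) * L < \<sigma>\<^sup>2 * L"
    using assms(4) by (intro mult_strict_right_mono) (auto simp: L_def add_pos_nonneg)
  moreover have "\<epsilon> * (L / 2) * (1 + 2 * K) + 4 * K * \<epsilon> * L = \<epsilon> * (1 + 10 * K) * L / 2"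
    by (simp add: algebra_simps)
  ultimately show ?thesis
    by linarith
qed

lemma norm_poly_le_coeffs:
  fixes P :: "complex poly"
  assumes "degree P \<le> n" "1 \<le> norm z"
  shows "norm (poly P z) \<le> (\<Sum>i\<le>n. norm (coeff P i)) * norm z ^ n"
proof -
  have "poly P z = (\<Sum>i\<le>n. coeff P i * z ^ i)"
    unfolding poly_altdef
    by (rule sum.mono_neutral_left) (use assms(1) in \<open>auto simp: coeff_eq_0\<close>)
  then have "norm (poly P z) \<le> (\<Sum>i\<le>n. norm (coeff P i * z ^ i))"
    by (simp add: norm_sum)
  also have "\<dots> \<le> (\<Sum>i\<le>n. norm (coeff P i) * norm z ^ n)"
  proof (rule sum_mono)
    fix i assume "i \<in> {..n}"
    then have "norm z ^ i \<le> norm z ^ n"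
      using assms(2) by (intro power_increasing) auto
    then show "norm (coeff P i * z ^ i) \<le> norm (coeff P i) * norm z ^ n"
      by (simp add: norm_mult norm_power mult_left_mono)
  qed
  finally show ?thesis
    by (simp add: sum_distrib_right)
qed

lemma norm_poly_ge_lead_coeff:
  fixes P :: "complex poly"
  assumes "P \<noteq> 0"
  shows "\<exists>R\<ge>1. \<forall>z. R \<le> norm z \<longrightarrow> norm (lead_coeff P) / 2 * norm z ^ degree P \<le> norm (poly P z)"
proof -
  have "\<forall>\<^sub>F z in at_infinity. dist (poly P z / z ^ degree P) (lead_coeff P) < norm (lead_coeff P) / 2"
    using assms by (intro tendstoD[OF poly_divide_tendsto_aux]) simp
  then obtain R where R: "\<And>z. R \<le> norm z \<Longrightarrow>
      dist (poly P z / z ^ degree P) (lead_coeff P) < norm (lead_coeff P) / 2"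
    by (auto simp: eventually_at_infinity)
  have "norm (lead_coeff P) / 2 * norm z ^ degree P \<le> norm (poly P z)" if "max R 1 \<le> norm z" for z
  proof -
    have "0 < norm z"
      using that by linarith
    have "norm (lead_coeff P) - norm (poly P z / z ^ degree P) \<le> dist (poly P z / z ^ degree P) (lead_coeff P)"
      using norm_triangle_ineq2[of "lead_coeff P" "poly P z / z ^ degree P"]
      by (simp add: dist_norm norm_minus_commute)
    with R[of z] that have "norm (lead_coeff P) / 2 \<le> norm (poly P z) / norm z ^ degree P"
      by (simp add: norm_divide norm_power)
    with \<open>0 < norm z\<close> show ?thesis
      by (simp add: field_simps)
  qed
  then show ?thesis
    by (intro exI[of _ "max R 1"]) auto
qed

lemma poly_dominated_far:
  fixes Y P :: "complex poly"
  assumes "Y \<noteq> 0" "degree P \<le> degree Y"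
  shows "\<exists>R K. 0 \<le> K \<and> (\<forall>z. R \<le> norm z \<longrightarrow> poly Y z \<noteq> 0 \<and> norm (poly P z) \<le> K * norm (poly Y z))"
proof -
  obtain R where R: "R \<ge> 1"
    "\<And>z. R \<le> norm z \<Longrightarrow> norm (lead_coeff Y) / 2 * norm z ^ degree Y \<le> norm (poly Y z)"
    using norm_poly_ge_lead_coeff[OF assms(1)] by blast
  define C where "C = (\<Sum>i\<le>degree Y. norm (coeff P i))"
  define K where "K = 2 * C / norm (lead_coeff Y)"
  have lc: "norm (lead_coeff Y) > 0" using assms(1) by simp
  have "0 \<le> K" using lc by (simp add: K_def C_def sum_nonneg)
  moreover have "poly Y z \<noteq> 0 \<and> norm (poly P z) \<le> K * norm (poly Y z)" if z: "R \<le> norm z" for z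
  proof -
    have z1: "1 \<le> norm z" using z R(1) by linarith
    have lower: "norm (lead_coeff Y) / 2 * norm z ^ degree Y \<le> norm (poly Y z)"
      using R(2)[OF z] .
    moreover have "0 < norm (lead_coeff Y) / 2 * norm z ^ degree Y"
      using lc z1 by (intro mult_pos_pos zero_less_power) auto
    moreover have "norm (poly P z) \<le> K * (norm (lead_coeff Y) / 2 * norm z ^ degree Y)"
      using norm_poly_le_coeffs[OF assms(2) z1] lc by (simp add: K_def C_def)
    moreover have "K * (norm (lead_coeff Y) / 2 * norm z ^ degree Y) \<le> K * norm (poly Y z)"
      using lower \<open>0 \<le> K\<close> by (rule mult_left_mono)
    ultimately show ?thesis
      by auto
  qed
  ultimately show ?thesis by blast
qed

lemma degree_pCons0_pderiv_le:
  fixes Y :: "'a :: {idom, semiring_char_0} poly"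
  shows "degree (pCons 0 (pderiv Y)) \<le> degree Y"
proof (cases "pderiv Y = 0")
  case False
  then have "degree Y \<noteq> 0"
    by (simp add: pderiv_eq_0_iff)
  moreover from False have "degree (pCons 0 (pderiv Y)) = Suc (degree Y - 1)"
    by (simp add: degree_pderiv)
  ultimately show ?thesis
    by simp
qed simp

lemma degree_pCons0_pCons0_pderiv2_le:
  fixes Y :: "'a :: {idom, semiring_char_0} poly"
  shows "degree (pCons 0 (pCons 0 (pderiv (pderiv Y)))) \<le> degree Y"
proof (cases "pderiv (pderiv Y) = 0")
  case False
  then have "degree Y \<noteq> 0"
    by (auto simp: pderiv_eq_0_iff degree_pderiv)
  moreover have "degree (pCons 0 (pderiv (pderiv Y))) \<le> degree (pderiv Y)"
    by (rule degree_pCons0_pderiv_le)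
  ultimately show ?thesis
    using False by (simp add: degree_pderiv)
qed simp

lemma poly_derivatives_dominated_far:
  fixes Y :: "complex poly"
  assumes "Y \<noteq> 0"
  shows "\<exists>R K. 0 \<le> K \<and> (\<forall>z. R \<le> norm z \<longrightarrow> poly Y z \<noteq> 0
    \<and> norm (z * poly (pderiv Y) z) \<le> K * norm (poly Y z)
    \<and> norm (z\<^sup>2 * poly (pderiv (pderiv Y)) z) \<le> K * norm (poly Y z))"
proof -
  obtain R1 K1 where K1: "0 \<le> K1" and R1: "\<And>z. R1 \<le> norm z \<Longrightarrow> poly Y z \<noteq> 0 \<and>
      norm (poly (pCons 0 (pderiv Y)) z) \<le> K1 * norm (poly Y z)"
    using poly_dominated_far[OF assms degree_pCons0_pderiv_le] by blast
  obtain R2 K2 where K2: "0 \<le> K2" and R2: "\<And>z. R2 \<le> norm z \<Longrightarrow>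
      norm (poly (pCons 0 (pCons 0 (pderiv (pderiv Y)))) z) \<le> K2 * norm (poly Y z)"
    using poly_dominated_far[OF assms degree_pCons0_pCons0_pderiv2_le] by blast
  have max_K: "K1 * norm w \<le> max K1 K2 * norm w" "K2 * norm w \<le> max K1 K2 * norm w"
    for w :: complex
    by (simp_all add: mult_right_mono)
  have "poly Y z \<noteq> 0 \<and> norm (z * poly (pderiv Y) z) \<le> max K1 K2 * norm (poly Y z)
      \<and> norm (z\<^sup>2 * poly (pderiv (pderiv Y)) z) \<le> max K1 K2 * norm (poly Y z)"
    if "max R1 R2 \<le> norm z" for z
  proof -
    have z: "R1 \<le> norm z" "R2 \<le> norm z"
      using that by auto
    have "norm (z * poly (pderiv Y) z) \<le> K1 * norm (poly Y z)"
      using R1[OF z(1)] by simp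
    moreover have "norm (z\<^sup>2 * poly (pderiv (pderiv Y)) z) \<le> K2 * norm (poly Y z)"
      using R2[OF z(2)] by (simp add: power2_eq_square mult.assoc)
    ultimately show ?thesis
      using R1[OF z(1)] max_K[of "poly Y z"] by (meson order_trans)
  qed
  then show ?thesis
    using K1 by (intro exI[of _ "max R1 R2"] exI[of _ "max K1 K2"]) auto
qed

lemma poly_ssc_quad:
  "poly (ssc_quad Y a b) x = poly Y x * (1 + a * x + b * x\<^sup>2)
     + (a + 2 * b * x) * (x * poly (pderiv Y) x) + b * (x\<^sup>2 * poly (pderiv (pderiv Y)) x)"
  by (simp add: ssc_quad_def exp_euler1_def exp_euler2_def exp_deriv_def pderiv_add
      power2_eq_square algebra_simps)

lemma norm_V_coeffs:
  fixes e :: complex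
  assumes "norm e \<le> 1"
  shows "norm (e + cnj e + e * cnj e) \<le> 3 * norm e" and "norm (e * cnj e) = (norm e)\<^sup>2"
proof -
  show "norm (e * cnj e) = (norm e)\<^sup>2"
    by (simp add: norm_mult power2_eq_square)
  moreover have "norm (e + cnj e + e * cnj e) \<le> norm e + norm (cnj e) + norm (e * cnj e)"
    by (intro norm_triangle_le add_mono norm_triangle_ineq order_refl)
  moreover have "(norm e)\<^sup>2 \<le> norm e"
    using mult_left_le[OF assms norm_ge_zero] by (simp add: power2_eq_square)
  ultimately show "norm (e + cnj e + e * cnj e) \<le> 3 * norm e"
    by simp
qed

lemma poly_ssc_V_real_nonzero:
  fixes Y :: "complex poly" and e :: complex and t K \<sigma> :: real
  defines "x \<equiv> complex_of_real t"
  assumes Y: "poly Y x \<noteq> 0"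
    and d1: "norm (x * poly (pderiv Y) x) \<le> K * norm (poly Y x)"
    and d2: "norm (x\<^sup>2 * poly (pderiv (pderiv Y)) x) \<le> K * norm (poly Y x)"
    and e: "e \<noteq> 0" "norm e \<le> 1" "0 \<le> \<sigma>" "\<sigma> * norm e \<le> \<bar>Im e\<bar>"
    and K: "0 \<le> K" and small: "norm e * (1 + 10 * K) < \<sigma>\<^sup>2"
  shows "poly (ssc_quad Y (e + cnj e + e * cnj e) (e * cnj e)) x \<noteq> 0"
proof -
  define \<epsilon> where "\<epsilon> = norm e"
  define N where "N = norm (1 + e * x)"
  define y where "y = poly Y x"
  define a where "a = e + cnj e + e * cnj e"
  define b where "b = e * cnj e"
  define rest where "rest = y * of_real (\<epsilon>\<^sup>2 * t) + (a + 2 * b * x) * (x * poly (pderiv Y) x)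
    + b * (x\<^sup>2 * poly (pderiv (pderiv Y)) x)"
  have \<epsilon>: "0 < \<epsilon>" "\<epsilon> \<le> 1" "\<epsilon>\<^sup>2 \<le> \<epsilon>"
    using e by (auto simp: \<epsilon>_def power2_eq_square mult_le_cancel_left1)
  have b: "b = of_real (\<epsilon>\<^sup>2)"
    unfolding b_def \<epsilon>_def by (rule complex_norm_square[symmetric])
  have a: "norm a \<le> 3 * \<epsilon>" and nb: "norm b = \<epsilon>\<^sup>2"
    using norm_V_coeffs[OF e(2)] by (simp_all add: a_def b_def \<epsilon>_def)
  have "(1 + e * x) * cnj (1 + e * x) = of_real (N\<^sup>2)"
    unfolding N_def by (rule complex_norm_square[symmetric])
  then have "of_real (N\<^sup>2) = 1 + (e + cnj e) * x + b * x\<^sup>2"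
    by (simp add: b_def x_def power2_eq_square algebra_simps)
  then have "1 + a * x + b * x\<^sup>2 = of_real (N\<^sup>2) + b * x"
    by (simp add: a_def b_def algebra_simps)
  also have "b * x = of_real (\<epsilon>\<^sup>2 * t)"
    by (simp add: b x_def)
  finally have "1 + a * x + b * x\<^sup>2 = of_real (N\<^sup>2) + of_real (\<epsilon>\<^sup>2 * t)" .
  then have split: "poly (ssc_quad Y a b) x = y * of_real (N\<^sup>2) + rest"
    by (simp add: poly_ssc_quad rest_def y_def algebra_simps)
  have "norm rest \<le> norm y * (\<epsilon>\<^sup>2 * \<bar>t\<bar>) + (3 * \<epsilon> + 2 * \<epsilon>\<^sup>2 * \<bar>t\<bar>) * (K * norm y)
      + \<epsilon>\<^sup>2 * (K * norm y)"
  proof -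
    have "norm (a + 2 * b * x) \<le> 3 * \<epsilon> + 2 * \<epsilon>\<^sup>2 * \<bar>t\<bar>"
      using norm_triangle_ineq[of a "2 * b * x"] a nb by (simp add: x_def norm_mult)
    then have "norm ((a + 2 * b * x) * (x * poly (pderiv Y) x))
        \<le> (3 * \<epsilon> + 2 * \<epsilon>\<^sup>2 * \<bar>t\<bar>) * (K * norm y)"
      unfolding norm_mult[of "a + 2 * b * x"] using d1 \<epsilon>(1)
      by (intro mult_mono) (auto simp: y_def)
    moreover have "norm (b * (x\<^sup>2 * poly (pderiv (pderiv Y)) x)) \<le> \<epsilon>\<^sup>2 * (K * norm y)"
      using d2 nb by (simp add: norm_mult y_def mult_left_mono)
    moreover have "norm (y * of_real (\<epsilon>\<^sup>2 * t)) = norm y * (\<epsilon>\<^sup>2 * \<bar>t\<bar>)"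
      by (simp add: norm_mult abs_mult del: of_real_mult of_real_power)
    ultimately show ?thesis
      unfolding rest_def by (smt (verit) norm_triangle_ineq)
  qed
  also have "\<dots> \<le> norm y * (\<epsilon>\<^sup>2 * \<bar>t\<bar> * (1 + 2 * K) + 4 * K * \<epsilon>)"
  proof -
    have "\<epsilon>\<^sup>2 * (K * norm y) \<le> \<epsilon> * (K * norm y)"
      using \<epsilon> K by (intro mult_right_mono) auto
    then show ?thesis by (simp add: algebra_simps)
  qed
  also have "\<dots> < norm y * N\<^sup>2"
  proof (rule mult_strict_left_mono)
    show "\<epsilon>\<^sup>2 * \<bar>t\<bar> * (1 + 2 * K) + 4 * K * \<epsilon> < N\<^sup>2"
      using sector_line_norm_lower[OF e(1,4), of t] \<epsilon> K e(3) small
      by (intro sector_quadratic_dominates) (auto simp: \<epsilon>_def N_def x_def)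
  qed (use Y in \<open>simp add: y_def\<close>)
  finally have "norm rest < norm (y * of_real (N\<^sup>2))"
    by (simp add: norm_mult del: of_real_power)
  then have "y * of_real (N\<^sup>2) + rest \<noteq> 0"
    by (metis add_eq_0_iff norm_minus_cancel order_less_irrefl)
  then show ?thesis
    using split by (simp add: a_def b_def)
qed

lemma ssc_V_no_large_real_roots:
  fixes Y :: "complex poly" and \<sigma> :: real
  assumes "Y \<noteq> 0" "0 < \<sigma>"
  shows "\<exists>R. \<exists>c>0. \<forall>e t. e \<noteq> 0 \<longrightarrow> \<sigma> * norm e \<le> \<bar>Im e\<bar> \<longrightarrow> norm e < c \<longrightarrow> R \<le> \<bar>t\<bar> \<longrightarrow>
    poly (ssc_quad Y (e + cnj e + e * cnj e) (e * cnj e)) (of_real t) \<noteq> 0"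
proof -
  obtain R K where K: "0 \<le> K" and R: "\<And>z. R \<le> norm z \<Longrightarrow> poly Y z \<noteq> 0
    \<and> norm (z * poly (pderiv Y) z) \<le> K * norm (poly Y z)
    \<and> norm (z\<^sup>2 * poly (pderiv (pderiv Y)) z) \<le> K * norm (poly Y z)"
    using poly_derivatives_dominated_far[OF assms(1)] by blast
  define c where "c = min 1 (\<sigma>\<^sup>2 / (1 + 10 * K))"
  have "0 < c"
    using assms(2) K by (simp add: c_def)
  moreover have "poly (ssc_quad Y (e + cnj e + e * cnj e) (e * cnj e)) (of_real t) \<noteq> 0"
    if "e \<noteq> 0" "\<sigma> * norm e \<le> \<bar>Im e\<bar>" "norm e < c" "R \<le> \<bar>t\<bar>" for e t
  proof (rule poly_ssc_V_real_nonzero)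
    show "norm e * (1 + 10 * K) < \<sigma>\<^sup>2"
      using that(3) K by (simp add: c_def pos_less_divide_eq add_pos_nonneg)
  qed (use that R[of "of_real t"] K assms(2) in \<open>auto simp: c_def\<close>)
  ultimately show ?thesis
    by blast
qed

section \<open>Stability of simple roots\<close>

lemma order_eq_1_iff_pderiv:
  fixes p :: "'a :: {idom, semiring_char_0} poly"
  assumes "p \<noteq> 0" "poly p x = 0"
  shows "order x p = 1 \<longleftrightarrow> poly (pderiv p) x \<noteq> 0"
proof -
  have "pderiv p \<noteq> 0"
    using assms pderiv_iszero[of p] by auto
  then show ?thesis
    using order_pderiv[OF assms] order_root[of "pderiv p" x] by auto
qed

text \<open>Newton's method: x \<mapsto> x - g x / d is a contraction of the disc into itself.\<close>

lemma unique_zero_in_cball: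
  fixes g g' :: "complex \<Rightarrow> complex" and \<rho> d :: complex and \<eta> :: real
  assumes "0 < \<eta>" "d \<noteq> 0"
    and deriv: "\<And>z. z \<in> cball \<rho> \<eta> \<Longrightarrow> (g has_field_derivative g' z) (at z)"
    and deriv_near: "\<And>z. z \<in> cball \<rho> \<eta> \<Longrightarrow> norm (g' z - d) \<le> norm d / 2"
    and centre: "norm (g \<rho>) \<le> norm d * \<eta> / 2"
  shows "\<exists>!z. z \<in> cball \<rho> \<eta> \<and> g z = 0"
proof -
  define G where "G x = x - g x / d" for x
  have G_deriv: "(G has_field_derivative (1 - g' z / d)) (at z within cball \<rho> \<eta>)"
    if "z \<in> cball \<rho> \<eta>" for z
    unfolding G_def
    using DERIV_diff[OF DERIV_ident DERIV_cdivide[OF deriv[OF that]]]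
    by (rule has_field_derivative_at_within)
  have G_bound: "norm (1 - g' z / d) \<le> 1 / 2" if "z \<in> cball \<rho> \<eta>" for z
  proof -
    have "norm (1 - g' z / d) = norm (g' z - d) / norm d"
      using assms(2) by (simp add: field_simps norm_divide norm_minus_commute)
    also have "\<dots> \<le> 1 / 2"
      using deriv_near[OF that] assms(2) by (simp add: divide_le_eq)
    finally show ?thesis .
  qed
  have G_lipschitz: "dist (G x) (G y) \<le> 1 / 2 * dist x y"
    if "x \<in> cball \<rho> \<eta>" "y \<in> cball \<rho> \<eta>" for x y
    using field_differentiable_bound[OF convex_cball G_deriv G_bound that] by (simp add: dist_norm)
  have "G x \<in> cball \<rho> \<eta>" if "x \<in> cball \<rho> \<eta>" for x
  proof -
    have "dist \<rho> (G \<rho>) = norm (g \<rho>) / norm d"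
      by (simp add: G_def dist_norm norm_divide)
    also have "\<dots> \<le> \<eta> / 2"
      using centre assms(2) by (simp add: field_simps)
    finally have "dist \<rho> (G \<rho>) \<le> \<eta> / 2" .
    moreover have "dist (G \<rho>) (G x) \<le> \<eta> / 2"
      using G_lipschitz[of \<rho> x] that assms(1) by simp
    ultimately show ?thesis
      using dist_triangle[of \<rho> "G x" "G \<rho>"] by simp
  qed
  then have "\<exists>!x\<in>cball \<rho> \<eta>. G x = x"
    using assms(1) G_lipschitz
    by (intro Banach_fix[where c = "1 / 2"]) (auto intro: compact_imp_complete)
  moreover have "G x = x \<longleftrightarrow> g x = 0" for x
    using assms(2) by (simp add: G_def)
  ultimately show ?thesis
    by simp
qed

lemma simple_root_persists:
  fixes Z P :: "complex poly" and \<rho> :: complex and \<eta> :: real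
  defines "d \<equiv> poly (pderiv Z) \<rho>"
  assumes "0 < \<eta>" "poly Z \<rho> = 0" "d \<noteq> 0"
    and Z'_near: "\<And>z. z \<in> cball \<rho> \<eta> \<Longrightarrow> norm (poly (pderiv Z) z - d) \<le> norm d / 4"
    and P_small: "norm (poly P \<rho>) \<le> norm d * \<eta> / 2"
    and P'_small: "\<And>z. z \<in> cball \<rho> \<eta> \<Longrightarrow> norm (poly (pderiv P) z) \<le> norm d / 4"
  shows "\<exists>z\<in>cball \<rho> \<eta>. poly (Z + P) z = 0 \<and> order z (Z + P) = 1
    \<and> (\<forall>w\<in>cball \<rho> \<eta>. poly (Z + P) w = 0 \<longrightarrow> w = z)"
proof -
  have deriv_near: "norm (poly (pderiv (Z + P)) z - d) \<le> norm d / 2" if "z \<in> cball \<rho> \<eta>" for z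
  proof -
    have "poly (pderiv (Z + P)) z - d = (poly (pderiv Z) z - d) + poly (pderiv P) z"
      by (simp add: pderiv_add)
    then have "norm (poly (pderiv (Z + P)) z - d)
        \<le> norm (poly (pderiv Z) z - d) + norm (poly (pderiv P) z)"
      by (metis norm_triangle_ineq)
    with Z'_near[OF that] P'_small[OF that] show ?thesis
      by linarith
  qed
  have "\<exists>!z. z \<in> cball \<rho> \<eta> \<and> poly (Z + P) z = 0"
  proof (rule unique_zero_in_cball[where g' = "poly (pderiv (Z + P))"])
    show "(poly (Z + P) has_field_derivative poly (pderiv (Z + P)) z) (at z)" for z
      by (rule poly_DERIV)
  qed (use assms(2,3,4) deriv_near P_small in auto)
  then obtain z where z: "z \<in> cball \<rho> \<eta>" "poly (Z + P) z = 0"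
    and unique: "\<And>w. w \<in> cball \<rho> \<eta> \<Longrightarrow> poly (Z + P) w = 0 \<Longrightarrow> w = z"
    by blast
  have "poly (pderiv (Z + P)) z \<noteq> 0"
    using deriv_near[OF z(1)] assms(4) by auto
  moreover from this have "Z + P \<noteq> 0"
    by auto
  ultimately have "order z (Z + P) = 1"
    using order_eq_1_iff_pderiv[of "Z + P" z] z(2) by blast
  with z unique show ?thesis
    by blast
qed

lemma finite_pos_lower_bound:
  assumes "finite A" "\<And>x. x \<in> A \<Longrightarrow> (0::real) < h x"
  shows "\<exists>d>0. \<forall>x\<in>A. d \<le> h x"
  using assms
proof (induction A rule: finite_induct)
  case (insert a A)
  then obtain d where "d > 0" "\<forall>x\<in>A. d \<le> h x" by auto
  with insert.prems show ?case
    by (intro exI[of _ "min d (h a)"]) auto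
qed (auto intro: exI[of _ 1])

lemma isCont_cball_radius:
  fixes f :: "complex \<Rightarrow> complex"
  assumes "isCont f \<rho>" "0 < \<epsilon>" "0 < \<tau>"
  shows "\<exists>\<eta>>0. \<eta> < \<tau> \<and> (\<forall>z\<in>cball \<rho> \<eta>. norm (f z - f \<rho>) \<le> \<epsilon>)"
proof -
  obtain \<eta> where "0 < \<eta>" and \<eta>: "\<forall>z. dist z \<rho> < \<eta> \<longrightarrow> dist (f z) (f \<rho>) < \<epsilon>"
    using assms(1,2) continuous_at_eps_delta by blast
  have "norm (f z - f \<rho>) \<le> \<epsilon>" if "z \<in> cball \<rho> (\<eta> / 2)" for z
    using that \<open>0 < \<eta>\<close> \<eta>[rule_format, of z] by (simp add: dist_norm norm_minus_commute)
  then show ?thesis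
    using \<open>0 < \<eta>\<close> assms(3) by (intro exI[of _ "min (\<eta> / 2) (\<tau> / 2)"]) auto
qed

lemma poly_bounded_below_off_roots:
  fixes Z :: "complex poly" and \<eta> :: "complex \<Rightarrow> real"
  assumes "\<And>\<rho>. poly Z \<rho> = 0 \<Longrightarrow> 0 < \<eta> \<rho>"
  shows "\<exists>c>0. \<forall>z\<in>cball 0 R - (\<Union>\<rho>\<in>{\<rho>. poly Z \<rho> = 0}. ball \<rho> (\<eta> \<rho>)). c \<le> norm (poly Z z)"
proof (cases "cball 0 R - (\<Union>\<rho>\<in>{\<rho>. poly Z \<rho> = 0}. ball \<rho> (\<eta> \<rho>)) = {}")
  case False
  define K where "K = cball 0 R - (\<Union>\<rho>\<in>{\<rho>. poly Z \<rho> = 0}. ball \<rho> (\<eta> \<rho>))"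
  have "compact K"
    unfolding K_def by (intro compact_diff) auto
  moreover have "continuous_on K (\<lambda>z. norm (poly Z z))"
    by (intro continuous_intros)
  moreover have "K \<noteq> {}"
    using False by (simp add: K_def)
  ultimately obtain k where k: "k \<in> K" "\<forall>z\<in>K. norm (poly Z k) \<le> norm (poly Z z)"
    using continuous_attains_inf[of K "\<lambda>z. norm (poly Z z)"] by blast
  have "poly Z k \<noteq> 0"
    using k(1) assms by (force simp: K_def)
  with k show ?thesis
    by (intro exI[of _ "norm (poly Z k)"]) (auto simp: K_def)
qed (auto intro: exI[of _ 1])

text \<open>Near each root apply simple_root_persists; on the rest of the disc |Z| is bounded below.\<close>

lemma simple_roots_stable:
  fixes Z :: "complex poly" and \<tau> R :: real
  assumes "Z \<noteq> 0" "0 < \<tau>"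
    and simple: "\<And>\<rho>. poly Z \<rho> = 0 \<Longrightarrow> poly (pderiv Z) \<rho> \<noteq> 0"
    and inside: "\<And>\<rho>. poly Z \<rho> = 0 \<Longrightarrow> norm \<rho> + \<tau> \<le> R"
  shows "\<exists>\<delta>>0. \<forall>P. (\<forall>z\<in>cball 0 R. norm (poly P z) \<le> \<delta> \<and> norm (poly (pderiv P) z) \<le> \<delta>) \<longrightarrow>
    (\<exists>\<Phi>. (\<forall>\<rho>. poly Z \<rho> = 0 \<longrightarrow>
            poly (Z + P) (\<Phi> \<rho>) = 0 \<and> order (\<Phi> \<rho>) (Z + P) = 1 \<and> dist (\<Phi> \<rho>) \<rho> < \<tau>)
       \<and> (\<forall>w\<in>cball 0 R. poly (Z + P) w = 0 \<longrightarrow> w \<in> \<Phi> ` {\<rho>. poly Z \<rho> = 0}))"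
proof -
  define D where "D = {\<rho>. poly Z \<rho> = 0}"
  have "finite D"
    unfolding D_def using assms(1) by (rule poly_roots_finite)
  have "\<exists>\<eta>>0. \<eta> < \<tau> \<and> (\<forall>z\<in>cball \<rho> \<eta>.
      norm (poly (pderiv Z) z - poly (pderiv Z) \<rho>) \<le> norm (poly (pderiv Z) \<rho>) / 4)"
    if "\<rho> \<in> D" for \<rho>
    using simple[of \<rho>] that assms(2) by (intro isCont_cball_radius poly_isCont) (auto simp: D_def)
  then obtain \<eta> where \<eta>: "\<And>\<rho>. \<rho> \<in> D \<Longrightarrow> 0 < \<eta> \<rho> \<and> \<eta> \<rho> < \<tau> \<and> (\<forall>z\<in>cball \<rho> (\<eta> \<rho>).
      norm (poly (pderiv Z) z - poly (pderiv Z) \<rho>) \<le> norm (poly (pderiv Z) \<rho>) / 4)"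
    by metis
  have ball_inside: "cball \<rho> (\<eta> \<rho>) \<subseteq> cball 0 R" if "\<rho> \<in> D" for \<rho>
  proof
    fix z assume "z \<in> cball \<rho> (\<eta> \<rho>)"
    then have "norm z \<le> norm \<rho> + \<eta> \<rho>"
      using norm_triangle_ineq2[of z \<rho>] by (simp add: dist_norm norm_minus_commute)
    then show "z \<in> cball 0 R"
      using \<eta>[OF that] inside[of \<rho>] that by (simp add: D_def)
  qed
  define K where "K = cball 0 R - (\<Union>\<rho>\<in>D. ball \<rho> (\<eta> \<rho>))"
  have "\<exists>c>0. \<forall>z\<in>K. c \<le> norm (poly Z z)"
    unfolding K_def D_def using \<eta> by (intro poly_bounded_below_off_roots) (simp add: D_def)
  then obtain c where "0 < c" and c: "\<And>z. z \<in> K \<Longrightarrow> c \<le> norm (poly Z z)"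
    by blast
  have "\<exists>d>0. \<forall>\<rho>\<in>D. d \<le> min (norm (poly (pderiv Z) \<rho>) * \<eta> \<rho> / 2) (norm (poly (pderiv Z) \<rho>) / 4)"
    using \<eta> simple by (intro finite_pos_lower_bound[OF \<open>finite D\<close>]) (simp add: D_def)
  then obtain d where "0 < d" and d_le: "\<And>\<rho>. \<rho> \<in> D \<Longrightarrow>
      d \<le> norm (poly (pderiv Z) \<rho>) * \<eta> \<rho> / 2 \<and> d \<le> norm (poly (pderiv Z) \<rho>) / 4"
    by auto
  define \<delta> where "\<delta> = min (c / 2) d"
  have "0 < \<delta>"
    using \<open>0 < c\<close> \<open>0 < d\<close> by (simp add: \<delta>_def)
  moreover have "\<exists>\<Phi>. (\<forall>\<rho>. poly Z \<rho> = 0 \<longrightarrow>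
        poly (Z + P) (\<Phi> \<rho>) = 0 \<and> order (\<Phi> \<rho>) (Z + P) = 1 \<and> dist (\<Phi> \<rho>) \<rho> < \<tau>)
      \<and> (\<forall>w\<in>cball 0 R. poly (Z + P) w = 0 \<longrightarrow> w \<in> \<Phi> ` D)"
    if P: "\<forall>z\<in>cball 0 R. norm (poly P z) \<le> \<delta> \<and> norm (poly (pderiv P) z) \<le> \<delta>" for P
  proof -
    have "\<exists>z\<in>cball \<rho> (\<eta> \<rho>). poly (Z + P) z = 0 \<and> order z (Z + P) = 1
        \<and> (\<forall>w\<in>cball \<rho> (\<eta> \<rho>). poly (Z + P) w = 0 \<longrightarrow> w = z)" if "\<rho> \<in> D" for \<rho>
    proof (rule simple_root_persists)
      have "\<rho> \<in> cball \<rho> (\<eta> \<rho>)"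
        using \<eta>[OF that] by simp
      then have "\<rho> \<in> cball 0 R"
        using ball_inside[OF that] by blast
      then show "norm (poly P \<rho>) \<le> norm (poly (pderiv Z) \<rho>) * \<eta> \<rho> / 2"
        using P d_le[OF that] by (force simp: \<delta>_def)
      show "norm (poly (pderiv P) z) \<le> norm (poly (pderiv Z) \<rho>) / 4" if "z \<in> cball \<rho> (\<eta> \<rho>)" for z
        using P d_le[OF \<open>\<rho> \<in> D\<close>] ball_inside[OF \<open>\<rho> \<in> D\<close>] that by (force simp: \<delta>_def)
    qed (use that \<eta> simple in \<open>auto simp: D_def\<close>)
    then obtain \<Phi> where \<Phi>: "\<And>\<rho>. \<rho> \<in> D \<Longrightarrow> \<Phi> \<rho> \<in> cball \<rho> (\<eta> \<rho>) \<and> poly (Z + P) (\<Phi> \<rho>) = 0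
        \<and> order (\<Phi> \<rho>) (Z + P) = 1 \<and> (\<forall>w\<in>cball \<rho> (\<eta> \<rho>). poly (Z + P) w = 0 \<longrightarrow> w = \<Phi> \<rho>)"
      by metis
    have "w \<in> \<Phi> ` D" if w: "w \<in> cball 0 R" "poly (Z + P) w = 0" for w
    proof (cases "w \<in> K")
      case True
      then have "c \<le> norm (poly Z w)"
        by (rule c)
      moreover have "norm (poly Z w) = norm (poly P w)"
        using w(2) by (simp add: add_eq_0_iff)
      ultimately show ?thesis
        using P w(1) \<open>0 < c\<close> by (force simp: \<delta>_def)
    next
      case False
      then obtain \<rho> where "\<rho> \<in> D" "w \<in> cball \<rho> (\<eta> \<rho>)"
        using w(1) by (auto simp: K_def)
      then show ?thesis
        using \<Phi> w(2) by blast
    qed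
    moreover have "dist (\<Phi> \<rho>) \<rho> < \<tau>" if "\<rho> \<in> D" for \<rho>
      using \<Phi>[OF that] \<eta>[OF that] by (simp add: dist_commute)
    ultimately show ?thesis
      using \<Phi> by (intro exI[of _ \<Phi>]) (auto simp: D_def)
  qed
  ultimately show ?thesis
    by (auto simp: D_def)
qed

section \<open>Counting the roots of the perturbed polynomial\<close>

lemma sum_order_roots_eq_degree:
  fixes P :: "complex poly"
  assumes "P \<noteq> 0"
  shows "(\<Sum>z | poly P z = 0. order z P) = degree P"
proof -
  have "degree P = size (proots P)"
    by (simp add: size_proots_complex)
  also have "\<dots> = (\<Sum>z\<in>set_mset (proots P). count (proots P) z)"
    by (simp add: size_multiset_overloaded_eq)
  finally show ?thesis
    using assms by simp
qed

lemma card_image_Un_filter: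
  assumes "finite D" "finite E" "inj_on \<Phi> D" "\<Phi> ` D \<inter> E = {}"
    and P: "\<And>x. x \<in> D \<Longrightarrow> P (\<Phi> x) \<longleftrightarrow> P x"
  shows "card {z. P z \<and> z \<in> \<Phi> ` D \<union> E} = card {x. P x \<and> x \<in> D} + card {z. P z \<and> z \<in> E}"
proof -
  have "{z. P z \<and> z \<in> \<Phi> ` D \<union> E} = \<Phi> ` {x. P x \<and> x \<in> D} \<union> {z. P z \<and> z \<in> E}"
    using P by auto
  moreover have "card (\<Phi> ` {x. P x \<and> x \<in> D}) = card {x. P x \<and> x \<in> D}"
    by (rule card_image, rule inj_on_subset[OF assms(3)]) auto
  moreover have "\<Phi> ` {x. P x \<and> x \<in> D} \<inter> {z. P z \<and> z \<in> E} = {}"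
    using assms(4) by auto
  ultimately show ?thesis
    using assms(1,2) by (simp add: card_Un_disjoint)
qed

text \<open>The orders of the roots outside the image of \<Phi> add up to 2; one of these roots is non-real,
  and its conjugate is another one.\<close>

lemma extra_roots_conjugate_pair:
  fixes Z1 :: "complex poly" and \<Phi> :: "complex \<Rightarrow> complex"
  assumes "Z1 \<noteq> 0" "finite D" "inj_on \<Phi> D"
    and roots: "\<And>\<rho>. \<rho> \<in> D \<Longrightarrow> poly Z1 (\<Phi> \<rho>) = 0 \<and> order (\<Phi> \<rho>) Z1 = 1"
    and degree: "degree Z1 = card D + 2"
    and cnj_roots: "\<And>z. poly Z1 z = 0 \<Longrightarrow> poly Z1 (cnj z) = 0"
    and real_roots: "\<And>z. poly Z1 z = 0 \<Longrightarrow> z \<in> \<real> \<Longrightarrow> z \<in> \<Phi> ` D"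
    and cnj_image: "\<And>\<rho>. \<rho> \<in> D \<Longrightarrow> cnj (\<Phi> \<rho>) \<in> \<Phi> ` D"
  shows "\<exists>w. w \<notin> \<real> \<and> {z. poly Z1 z = 0} = \<Phi> ` D \<union> {w, cnj w} \<and> \<Phi> ` D \<inter> {w, cnj w} = {}
    \<and> order w Z1 = 1 \<and> order (cnj w) Z1 = 1"
proof -
  define W where "W = {z. poly Z1 z = 0}"
  define E where "E = W - \<Phi> ` D"
  have "finite W"
    unfolding W_def using assms(1) by (rule poly_roots_finite)
  have image_W: "\<Phi> ` D \<subseteq> W"
    using roots by (auto simp: W_def)
  have order_pos: "1 \<le> order z Z1" if "z \<in> W" for z
    using that assms(1) order_root[of Z1 z] by (simp add: W_def)
  have "(\<Sum>z\<in>\<Phi> ` D. order z Z1) = card D"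
    using roots by (simp add: sum.reindex[OF assms(3)])
  moreover have "(\<Sum>z\<in>W. order z Z1) = card D + 2"
    using sum_order_roots_eq_degree[OF assms(1)] degree by (simp add: W_def)
  ultimately have sum_E: "(\<Sum>z\<in>E. order z Z1) = 2"
    using sum.subset_diff[OF image_W \<open>finite W\<close>, of "\<lambda>z. order z Z1"] by (simp add: E_def)
  then obtain w where w: "w \<in> E"
    by fastforce
  have "w \<notin> \<real>"
    using w real_roots by (auto simp: E_def W_def)
  have cnj_w: "cnj w \<in> E"
  proof -
    have "cnj w \<notin> \<Phi> ` D"
    proof
      assume "cnj w \<in> \<Phi> ` D"
      then obtain \<rho> where "\<rho> \<in> D" "w = cnj (\<Phi> \<rho>)"
        by (metis complex_cnj_cnj imageE)
      with cnj_image w show False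
        by (auto simp: E_def)
    qed
    with w cnj_roots show ?thesis
      by (auto simp: E_def W_def)
  qed
  have "cnj w \<noteq> w"
    using \<open>w \<notin> \<real>\<close> by (simp add: Reals_cnj_iff)
  define E' where "E' = E - {w, cnj w}"
  have "finite E"
    using \<open>finite W\<close> by (simp add: E_def)
  have "(\<Sum>z\<in>E. order z Z1) = order w Z1 + order (cnj w) Z1 + (\<Sum>z\<in>E'. order z Z1)"
    using \<open>finite E\<close> w cnj_w \<open>cnj w \<noteq> w\<close>
    by (simp add: E'_def sum.remove[of E w] sum.remove[of "E - {w}" "cnj w"] Diff_insert2 [symmetric])
  moreover have "card E' \<le> (\<Sum>z\<in>E'. order z Z1)"
    using sum_mono[of E' "\<lambda>_. 1::nat" "\<lambda>z. order z Z1"] order_pos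
    by (simp add: E'_def E_def)
  moreover have "1 \<le> order w Z1" "1 \<le> order (cnj w) Z1"
    using w cnj_w order_pos by (auto simp: E_def)
  ultimately have "order w Z1 = 1" "order (cnj w) Z1 = 1" "card E' = 0"
    using sum_E by linarith+
  then have "E = {w, cnj w}"
    using \<open>finite E\<close> w cnj_w by (auto simp: E'_def)
  then have "W = \<Phi> ` D \<union> {w, cnj w}" "\<Phi> ` D \<inter> {w, cnj w} = {}"
    using image_W by (auto simp: E_def)
  with \<open>w \<notin> \<real>\<close> \<open>order w Z1 = 1\<close> \<open>order (cnj w) Z1 = 1\<close> show ?thesis
    unfolding W_def by blast
qed

lemma root_config_monom_mult:
  "root_config ([:0, 1:] ^ m * Z) s t r m \<longleftrightarrow> root_config Z s t r 0"
proof (cases "Z = 0")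
  case False
  have nonzero: "[:0, 1:] ^ m * Z \<noteq> 0"
    using False by simp
  have root_iff: "poly ([:0, 1:] ^ m * Z) z = 0 \<longleftrightarrow> poly Z z = 0" if "z \<noteq> 0" for z
    using that by (simp add: poly_power)
  have order_eq: "order z ([:0, 1:] ^ m * Z) = order z Z" if "z \<noteq> 0" for z
  proof -
    have "order z ([:0, 1:] ^ m) = 0"
      using that by (intro order_0I) (simp add: poly_power)
    then show ?thesis
      using order_mult[OF nonzero] by simp
  qed
  have "order 0 ([:0, 1:] ^ m * Z) = m + order 0 Z"
    using order_mult[OF nonzero] order_power_n_n[of 0 m] by simp
  moreover have "{z. z \<in> \<real> \<and> Re z < 0 \<and> poly ([:0, 1:] ^ m * Z) z = 0}
      = {z. z \<in> \<real> \<and> Re z < 0 \<and> poly Z z = 0}"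
    "{z. z \<in> \<real> \<and> Re z > 0 \<and> poly ([:0, 1:] ^ m * Z) z = 0}
      = {z. z \<in> \<real> \<and> Re z > 0 \<and> poly Z z = 0}"
    "{z. z \<notin> \<real> \<and> poly ([:0, 1:] ^ m * Z) z = 0} = {z. z \<notin> \<real> \<and> poly Z z = 0}"
    using root_iff by force+
  moreover have "(\<forall>z. z \<noteq> 0 \<and> poly ([:0, 1:] ^ m * Z) z = 0 \<longrightarrow> order z ([:0, 1:] ^ m * Z) = 1)
      \<longleftrightarrow> (\<forall>z. z \<noteq> 0 \<and> poly Z z = 0 \<longrightarrow> order z Z = 1)"
    using root_iff order_eq by auto
  ultimately show ?thesis
    using False nonzero by (simp add: root_config_def)
qed (simp add: root_config_def)

text \<open>A real root stays real: the conjugate of its image is the image of a root within 2\<tau> of it,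
  hence of the root itself.\<close>

lemma root_tracking_map:
  fixes Z1 :: "complex poly" and \<Phi> :: "complex \<Rightarrow> complex" and \<tau> R :: real
  assumes \<tau>: "\<And>\<rho>. \<rho> \<in> D \<Longrightarrow> \<tau> \<le> norm \<rho> \<and> (\<rho> \<notin> \<real> \<longrightarrow> \<tau> \<le> \<bar>Im \<rho>\<bar>) \<and> norm \<rho> + \<tau> \<le> R"
    and separated: "\<And>\<rho> \<rho>'. \<rho> \<in> D \<Longrightarrow> \<rho>' \<in> D \<Longrightarrow> \<rho> \<noteq> \<rho>' \<Longrightarrow> 2 * \<tau> \<le> dist \<rho> \<rho>'"
    and cnj_roots: "\<And>z. poly Z1 z = 0 \<Longrightarrow> poly Z1 (cnj z) = 0"
    and close: "\<And>\<rho>. \<rho> \<in> D \<Longrightarrow> poly Z1 (\<Phi> \<rho>) = 0 \<and> dist (\<Phi> \<rho>) \<rho> < \<tau>"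
    and onto: "\<And>w. w \<in> cball 0 R \<Longrightarrow> poly Z1 w = 0 \<Longrightarrow> w \<in> \<Phi> ` D"
  shows "inj_on \<Phi> D" and "\<And>\<rho>. \<rho> \<in> D \<Longrightarrow> cnj (\<Phi> \<rho>) \<in> \<Phi> ` D"
    and "\<And>\<rho>. \<rho> \<in> D \<Longrightarrow> \<Phi> \<rho> \<in> \<real> \<longleftrightarrow> \<rho> \<in> \<real>"
    and "\<And>\<rho>. \<rho> \<in> D \<Longrightarrow> \<rho> \<in> \<real> \<Longrightarrow> sgn (Re (\<Phi> \<rho>)) = sgn (Re \<rho>)"
proof -
  have same: "\<rho> = \<rho>'" if "\<rho> \<in> D" "\<rho>' \<in> D" "dist z \<rho> < \<tau>" "dist z \<rho>' < \<tau>" for z \<rho> \<rho>'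
    using separated[OF that(1,2)] dist_triangle3[of \<rho> \<rho>' z] that(3,4) by fastforce
  show "inj_on \<Phi> D"
    using close same by (intro inj_onI) metis
  have image_R: "cnj (\<Phi> \<rho>) \<in> cball 0 R" if "\<rho> \<in> D" for \<rho>
    using norm_triangle_ineq2[of "\<Phi> \<rho>" \<rho>] close[OF that] \<tau>[OF that] by (simp add: dist_norm)
  show cnj_image: "cnj (\<Phi> \<rho>) \<in> \<Phi> ` D" if "\<rho> \<in> D" for \<rho>
    using onto[OF image_R[OF that]] cnj_roots close[OF that] by blast
  show "\<Phi> \<rho> \<in> \<real> \<longleftrightarrow> \<rho> \<in> \<real>" if \<rho>: "\<rho> \<in> D" for \<rho>
  proof
    assume "\<rho> \<in> \<real>"
    obtain \<rho>' where \<rho>': "\<rho>' \<in> D" "cnj (\<Phi> \<rho>) = \<Phi> \<rho>'"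
      using cnj_image[OF \<rho>] by auto
    have "dist (cnj (\<Phi> \<rho>)) (cnj \<rho>) < \<tau>"
      using close[OF \<rho>] by (simp add: dist_norm flip: complex_cnj_diff)
    then have "dist (\<Phi> \<rho>') \<rho> < \<tau>"
      using \<open>\<rho> \<in> \<real>\<close> \<rho>'(2) by (simp add: Reals_cnj_iff)
    then have "\<rho>' = \<rho>"
      using same[OF \<rho>'(1) \<rho>, of "\<Phi> \<rho>'"] close[OF \<rho>'(1)] by blast
    with \<rho>' show "\<Phi> \<rho> \<in> \<real>"
      by (simp add: Reals_cnj_iff)
  next
    assume "\<Phi> \<rho> \<in> \<real>"
    show "\<rho> \<in> \<real>"
    proof (rule ccontr)
      assume "\<rho> \<notin> \<real>"
      have "\<bar>Im (\<Phi> \<rho> - \<rho>)\<bar> < \<tau>"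
        using abs_Im_le_cmod[of "\<Phi> \<rho> - \<rho>"] close[OF \<rho>] by (simp add: dist_norm)
      with \<open>\<Phi> \<rho> \<in> \<real>\<close> \<open>\<rho> \<notin> \<real>\<close> \<tau>[OF \<rho>] show False
        by (simp add: complex_is_Real_iff)
    qed
  qed
  show "sgn (Re (\<Phi> \<rho>)) = sgn (Re \<rho>)" if "\<rho> \<in> D" "\<rho> \<in> \<real>" for \<rho>
  proof -
    have "\<bar>Re (\<Phi> \<rho>) - Re \<rho>\<bar> < \<tau>"
      using abs_Re_le_cmod[of "\<Phi> \<rho> - \<rho>"] close[OF that(1)] by (simp add: dist_norm)
    moreover have "\<tau> \<le> \<bar>Re \<rho>\<bar>"
      using \<tau>[OF that(1)] that(2) by (auto elim: Reals_cases)
    ultimately show ?thesis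
      by (auto simp: sgn_real_def)
  qed
qed

lemma root_config_degree:
  assumes "root_config Z s t r 0"
  shows "degree Z = card {\<rho>. poly Z \<rho> = 0}"
proof -
  from assms have "Z \<noteq> 0" "order 0 Z = 0"
    and simple: "\<And>z. z \<noteq> 0 \<Longrightarrow> poly Z z = 0 \<Longrightarrow> order z Z = 1"
    unfolding root_config_def by auto
  have "order \<rho> Z = 1" if "poly Z \<rho> = 0" for \<rho>
  proof -
    have "\<rho> \<noteq> 0"
      using that \<open>Z \<noteq> 0\<close> \<open>order 0 Z = 0\<close> order_root[of Z 0] by auto
    with that show ?thesis
      using simple by blast
  qed
  then have "(\<Sum>\<rho> | poly Z \<rho> = 0. order \<rho> Z) = (\<Sum>\<rho> | poly Z \<rho> = 0. 1)"
    by (intro sum.cong) auto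
  then show ?thesis
    using sum_order_roots_eq_degree[OF \<open>Z \<noteq> 0\<close>] by simp
qed

lemma root_tracking_real_roots:
  fixes Z1 :: "complex poly" and \<Phi> :: "complex \<Rightarrow> complex" and \<tau> R :: real
  assumes far_real: "\<And>x. R < \<bar>x\<bar> \<Longrightarrow> poly Z1 (of_real x) \<noteq> 0"
    and \<tau>: "\<And>\<rho>. \<rho> \<in> D \<Longrightarrow> \<tau> \<le> norm \<rho> \<and> (\<rho> \<notin> \<real> \<longrightarrow> \<tau> \<le> \<bar>Im \<rho>\<bar>) \<and> norm \<rho> + \<tau> \<le> R"
    and close: "\<And>\<rho>. \<rho> \<in> D \<Longrightarrow> poly Z1 (\<Phi> \<rho>) = 0 \<and> order (\<Phi> \<rho>) Z1 = 1 \<and> dist (\<Phi> \<rho>) \<rho> < \<tau>"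
    and onto: "\<And>w. w \<in> cball 0 R \<Longrightarrow> poly Z1 w = 0 \<Longrightarrow> w \<in> \<Phi> ` D"
  shows "poly Z1 0 \<noteq> 0" and "\<And>z. poly Z1 z = 0 \<Longrightarrow> z \<in> \<real> \<Longrightarrow> z \<in> \<Phi> ` D"
proof -
  show "poly Z1 0 \<noteq> 0"
  proof
    assume root: "poly Z1 0 = 0"
    show False
    proof (cases "R < 0")
      case True
      then show False
        using far_real[of 0] root by simp
    next
      case False
      then obtain \<rho> where "\<rho> \<in> D" "0 = \<Phi> \<rho>"
        using onto[of 0] root by auto
      then show False
        using close \<tau> by (metis dist_0_norm linorder_not_le)
    qed
  qed
  show "z \<in> \<Phi> ` D" if "poly Z1 z = 0" "z \<in> \<real>" for z
  proof (cases "norm z \<le> R")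
    case True
    then show ?thesis
      using onto that(1) by simp
  next
    case False
    have "z = of_real (Re z)"
      using that(2) by (simp add: complex_is_Real_iff complex_eq_iff)
    moreover from this have "norm z = \<bar>Re z\<bar>"
      by (metis norm_of_real)
    ultimately show ?thesis
      using False far_real[of "Re z"] that(1) by auto
  qed
qed

lemma root_config_tracked:
  fixes Z Z1 :: "complex poly" and \<Phi> :: "complex \<Rightarrow> complex" and \<tau> R :: real
  defines "D \<equiv> {\<rho>. poly Z \<rho> = 0}"
  assumes rc: "root_config Z s t r 0" and degree: "degree Z1 = degree Z + 2"
    and cnj_roots: "\<And>z. poly Z1 z = 0 \<Longrightarrow> poly Z1 (cnj z) = 0"
    and far_real: "\<And>x. R < \<bar>x\<bar> \<Longrightarrow> poly Z1 (of_real x) \<noteq> 0"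
    and \<tau>: "\<And>\<rho>. \<rho> \<in> D \<Longrightarrow> \<tau> \<le> norm \<rho> \<and> (\<rho> \<notin> \<real> \<longrightarrow> \<tau> \<le> \<bar>Im \<rho>\<bar>) \<and> norm \<rho> + \<tau> \<le> R"
    and separated: "\<And>\<rho> \<rho>'. \<rho> \<in> D \<Longrightarrow> \<rho>' \<in> D \<Longrightarrow> \<rho> \<noteq> \<rho>' \<Longrightarrow> 2 * \<tau> \<le> dist \<rho> \<rho>'"
    and \<Phi>: "\<And>\<rho>. \<rho> \<in> D \<Longrightarrow> poly Z1 (\<Phi> \<rho>) = 0 \<and> order (\<Phi> \<rho>) Z1 = 1 \<and> dist (\<Phi> \<rho>) \<rho> < \<tau>"
    and onto: "\<And>w. w \<in> cball 0 R \<Longrightarrow> poly Z1 w = 0 \<Longrightarrow> w \<in> \<Phi> ` D"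
  shows "root_config Z1 s t (r + 2) 0"
proof -
  from rc have "Z \<noteq> 0"
    and cards: "card {z. z \<in> \<real> \<and> Re z < 0 \<and> poly Z z = 0} = s"
      "card {z. z \<in> \<real> \<and> Re z > 0 \<and> poly Z z = 0} = t"
      "card {z. z \<notin> \<real> \<and> poly Z z = 0} = r"
    unfolding root_config_def by auto
  have "finite D"
    unfolding D_def using \<open>Z \<noteq> 0\<close> by (rule poly_roots_finite)
  have "degree Z = card D"
    unfolding D_def using rc by (rule root_config_degree)
  have close: "\<And>\<rho>. \<rho> \<in> D \<Longrightarrow> poly Z1 (\<Phi> \<rho>) = 0 \<and> dist (\<Phi> \<rho>) \<rho> < \<tau>"
    using \<Phi> by blast
  have tracking: "inj_on \<Phi> D" "\<And>\<rho>. \<rho> \<in> D \<Longrightarrow> cnj (\<Phi> \<rho>) \<in> \<Phi> ` D"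
    "\<And>\<rho>. \<rho> \<in> D \<Longrightarrow> \<Phi> \<rho> \<in> \<real> \<longleftrightarrow> \<rho> \<in> \<real>"
    "\<And>\<rho>. \<rho> \<in> D \<Longrightarrow> \<rho> \<in> \<real> \<Longrightarrow> sgn (Re (\<Phi> \<rho>)) = sgn (Re \<rho>)"
    using root_tracking_map[of D \<tau> R Z1 \<Phi>] \<tau> separated cnj_roots close onto by blast+
  have Z1_0: "poly Z1 0 \<noteq> 0"
    and real_roots: "\<And>z. poly Z1 z = 0 \<Longrightarrow> z \<in> \<real> \<Longrightarrow> z \<in> \<Phi> ` D"
    using root_tracking_real_roots[of R Z1 D \<tau> \<Phi>] far_real \<tau> \<Phi> onto by blast+
  then have "Z1 \<noteq> 0"
    by auto
  have roots_\<Phi>: "\<And>\<rho>. \<rho> \<in> D \<Longrightarrow> poly Z1 (\<Phi> \<rho>) = 0 \<and> order (\<Phi> \<rho>) Z1 = 1"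
    using \<Phi> by blast
  have "degree Z1 = card D + 2"
    using degree \<open>degree Z = card D\<close> by simp
  then obtain w where w: "w \<notin> \<real>" and roots_Z1: "{z. poly Z1 z = 0} = \<Phi> ` D \<union> {w, cnj w}"
    and disjoint: "\<Phi> ` D \<inter> {w, cnj w} = {}" and order_w: "order w Z1 = 1" "order (cnj w) Z1 = 1"
    using extra_roots_conjugate_pair[OF \<open>Z1 \<noteq> 0\<close> \<open>finite D\<close> tracking(1) roots_\<Phi> _ cnj_roots
        real_roots tracking(2)]
    by blast
  have "cnj w \<notin> \<real>" "cnj w \<noteq> w"
    using w by (auto simp: Reals_cnj_iff)
  have card_roots: "card {z. P z \<and> poly Z1 z = 0} = card {\<rho>. P \<rho> \<and> poly Z \<rho> = 0} + card {z. P z \<and> z \<in> {w, cnj w}}"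
    if "\<And>\<rho>. \<rho> \<in> D \<Longrightarrow> P (\<Phi> \<rho>) \<longleftrightarrow> P \<rho>" for P
  proof -
    have "{z. P z \<and> poly Z1 z = 0} = {z. P z \<and> z \<in> \<Phi> ` D \<union> {w, cnj w}}"
      using roots_Z1 by blast
    moreover have "{\<rho>. P \<rho> \<and> poly Z \<rho> = 0} = {x. P x \<and> x \<in> D}"
      by (simp add: D_def)
    ultimately show ?thesis
      using card_image_Un_filter[of D "{w, cnj w}" \<Phi> P, OF \<open>finite D\<close> _ tracking(1) disjoint that]
      by simp
  qed
  have sign_iff: "Re (\<Phi> \<rho>) < 0 \<longleftrightarrow> Re \<rho> < 0" "Re (\<Phi> \<rho>) > 0 \<longleftrightarrow> Re \<rho> > 0"
    if "\<rho> \<in> D" "\<rho> \<in> \<real>" for \<rho>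
    using tracking(4)[OF that] by (metis sgn_less, metis sgn_greater)
  have "card {z. (z \<in> \<real> \<and> Re z < 0) \<and> poly Z1 z = 0}
      = card {\<rho>. (\<rho> \<in> \<real> \<and> Re \<rho> < 0) \<and> poly Z \<rho> = 0} + card {z. (z \<in> \<real> \<and> Re z < 0) \<and> z \<in> {w, cnj w}}"
    using tracking(3) sign_iff by (intro card_roots) blast
  moreover have "card {z. (z \<in> \<real> \<and> Re z > 0) \<and> poly Z1 z = 0}
      = card {\<rho>. (\<rho> \<in> \<real> \<and> Re \<rho> > 0) \<and> poly Z \<rho> = 0} + card {z. (z \<in> \<real> \<and> Re z > 0) \<and> z \<in> {w, cnj w}}"
    using tracking(3) sign_iff by (intro card_roots) blast
  moreover have "card {z. z \<notin> \<real> \<and> poly Z1 z = 0}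
      = card {\<rho>. \<rho> \<notin> \<real> \<and> poly Z \<rho> = 0} + card {z. z \<notin> \<real> \<and> z \<in> {w, cnj w}}"
    using tracking(3) by (intro card_roots) blast
  moreover have "{z. P z \<and> z \<in> {w, cnj w}} = {}" if "\<And>z. P z \<Longrightarrow> z \<in> \<real>" for P
    using that w \<open>cnj w \<notin> \<real>\<close> by blast
  moreover have "{z. z \<notin> \<real> \<and> z \<in> {w, cnj w}} = {w, cnj w}"
    using w \<open>cnj w \<notin> \<real>\<close> by blast
  then have "card {z. z \<notin> \<real> \<and> z \<in> {w, cnj w}} = 2"
    using \<open>cnj w \<noteq> w\<close> by simp
  moreover have "order z Z1 = 1" if "poly Z1 z = 0" for z
  proof -
    have "z \<in> \<Phi> ` D \<union> {w, cnj w}"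
      using that roots_Z1 by blast
    then show ?thesis
      using roots_\<Phi> order_w by blast
  qed
  ultimately show ?thesis
    using \<open>Z1 \<noteq> 0\<close> Z1_0 cards by (simp add: root_config_def order_0I)
qed

section \<open>The root configuration of the composed polynomial\<close>

lemma root_config_perturb:
  fixes Z :: "complex poly"
  assumes rc: "root_config Z s t r 0"
  shows "\<exists>R0. \<forall>R\<ge>R0. \<exists>\<delta>>0. \<forall>Z1.
    (\<forall>z\<in>cball 0 R. norm (poly (Z1 - Z) z) \<le> \<delta> \<and> norm (poly (pderiv (Z1 - Z)) z) \<le> \<delta>) \<longrightarrow>
    degree Z1 = degree Z + 2 \<longrightarrow> (\<forall>z. poly Z1 z = 0 \<longrightarrow> poly Z1 (cnj z) = 0) \<longrightarrow>
    (\<forall>x. R < \<bar>x\<bar> \<longrightarrow> poly Z1 (of_real x) \<noteq> 0) \<longrightarrow> root_config Z1 s t (r + 2) 0"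
proof -
  define D where "D = {\<rho>. poly Z \<rho> = 0}"
  from rc have "Z \<noteq> 0" "order 0 Z = 0" and simple: "\<And>z. z \<noteq> 0 \<Longrightarrow> poly Z z = 0 \<Longrightarrow> order z Z = 1"
    unfolding root_config_def by auto
  have "finite D"
    unfolding D_def using \<open>Z \<noteq> 0\<close> by (rule poly_roots_finite)
  have nonzero: "\<rho> \<noteq> 0" if "\<rho> \<in> D" for \<rho>
    using that \<open>Z \<noteq> 0\<close> \<open>order 0 Z = 0\<close> order_root[of Z 0] by (auto simp: D_def)
  have pderiv_nonzero: "poly (pderiv Z) \<rho> \<noteq> 0" if "poly Z \<rho> = 0" for \<rho>
  proof -
    have "\<rho> \<noteq> 0"
      using nonzero that by (simp add: D_def)
    then have "order \<rho> Z = 1"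
      using simple that by blast
    then show ?thesis
      using order_eq_1_iff_pderiv[OF \<open>Z \<noteq> 0\<close> that] by simp
  qed
  have "0 < min (norm \<rho>) (if \<rho> \<in> \<real> then norm \<rho> else \<bar>Im \<rho>\<bar>)" if "\<rho> \<in> D" for \<rho>
    using nonzero[OF that] by (auto simp: complex_is_Real_iff)
  then have "\<exists>d>0. \<forall>\<rho>\<in>D. d \<le> min (norm \<rho>) (if \<rho> \<in> \<real> then norm \<rho> else \<bar>Im \<rho>\<bar>)"
    by (rule finite_pos_lower_bound[OF \<open>finite D\<close>])
  then obtain \<tau>1 where "0 < \<tau>1" and \<tau>1: "\<And>\<rho>. \<rho> \<in> D \<Longrightarrow>
      \<tau>1 \<le> min (norm \<rho>) (if \<rho> \<in> \<real> then norm \<rho> else \<bar>Im \<rho>\<bar>)"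
    by blast
  have "finite {(\<rho>, \<rho>') \<in> D \<times> D. \<rho> \<noteq> \<rho>'}"
    using \<open>finite D\<close> by (auto intro: finite_subset[of _ "D \<times> D"])
  then have "\<exists>d>0. \<forall>p\<in>{(\<rho>, \<rho>') \<in> D \<times> D. \<rho> \<noteq> \<rho>'}. d \<le> dist (fst p) (snd p) / 2"
    by (rule finite_pos_lower_bound) auto
  then obtain \<tau>2 where "0 < \<tau>2" and \<tau>2: "\<And>p. p \<in> {(\<rho>, \<rho>') \<in> D \<times> D. \<rho> \<noteq> \<rho>'} \<Longrightarrow>
      \<tau>2 \<le> dist (fst p) (snd p) / 2"
    by blast
  define \<tau> where "\<tau> = min \<tau>1 \<tau>2"
  define R0 where "R0 = (\<Sum>\<rho>\<in>D. norm \<rho> + \<tau>)"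
  have "0 < \<tau>"
    using \<open>0 < \<tau>1\<close> \<open>0 < \<tau>2\<close> by (simp add: \<tau>_def)
  have separated: "2 * \<tau> \<le> dist \<rho> \<rho>'" if "\<rho> \<in> D" "\<rho>' \<in> D" "\<rho> \<noteq> \<rho>'" for \<rho> \<rho>'
    using \<tau>2[of "(\<rho>, \<rho>')"] that by (simp add: \<tau>_def)
  have "\<exists>\<delta>>0. \<forall>Z1.
    (\<forall>z\<in>cball 0 R. norm (poly (Z1 - Z) z) \<le> \<delta> \<and> norm (poly (pderiv (Z1 - Z)) z) \<le> \<delta>) \<longrightarrow>
    degree Z1 = degree Z + 2 \<longrightarrow> (\<forall>z. poly Z1 z = 0 \<longrightarrow> poly Z1 (cnj z) = 0) \<longrightarrow>
    (\<forall>x. R < \<bar>x\<bar> \<longrightarrow> poly Z1 (of_real x) \<noteq> 0) \<longrightarrow> root_config Z1 s t (r + 2) 0"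
    if "R0 \<le> R" for R
  proof -
    have \<tau>_bounds: "\<tau> \<le> norm \<rho> \<and> (\<rho> \<notin> \<real> \<longrightarrow> \<tau> \<le> \<bar>Im \<rho>\<bar>) \<and> norm \<rho> + \<tau> \<le> R" if "\<rho> \<in> D" for \<rho>
    proof -
      have "norm \<rho> + \<tau> \<le> R0"
        unfolding R0_def using \<open>finite D\<close> that \<open>0 < \<tau>\<close>
        by (intro member_le_sum[where f = "\<lambda>\<rho>. norm \<rho> + \<tau>"]) auto
      with \<tau>1[OF that] \<open>R0 \<le> R\<close> show ?thesis
        by (auto simp: \<tau>_def split: if_splits)
    qed
    obtain \<delta> where "0 < \<delta>" and \<delta>: "\<And>P. \<forall>z\<in>cball 0 R. norm (poly P z) \<le> \<delta> \<and> norm (poly (pderiv P) z) \<le> \<delta>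
        \<Longrightarrow> \<exists>\<Phi>. (\<forall>\<rho>. poly Z \<rho> = 0 \<longrightarrow>
            poly (Z + P) (\<Phi> \<rho>) = 0 \<and> order (\<Phi> \<rho>) (Z + P) = 1 \<and> dist (\<Phi> \<rho>) \<rho> < \<tau>)
          \<and> (\<forall>w\<in>cball 0 R. poly (Z + P) w = 0 \<longrightarrow> w \<in> \<Phi> ` {\<rho>. poly Z \<rho> = 0})"
      using simple_roots_stable[OF \<open>Z \<noteq> 0\<close> \<open>0 < \<tau>\<close> pderiv_nonzero, of R] \<tau>_bounds
      by (auto simp: D_def)
    show ?thesis
    proof (intro exI[of _ \<delta>] conjI[OF \<open>0 < \<delta>\<close>] allI impI)
      fix Z1 :: "complex poly"
      assume small: "\<forall>z\<in>cball 0 R. norm (poly (Z1 - Z) z) \<le> \<delta> \<and> norm (poly (pderiv (Z1 - Z)) z) \<le> \<delta>"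
        and "degree Z1 = degree Z + 2" and "\<forall>z. poly Z1 z = 0 \<longrightarrow> poly Z1 (cnj z) = 0"
        and "\<forall>x. R < \<bar>x\<bar> \<longrightarrow> poly Z1 (of_real x) \<noteq> 0"
      moreover obtain \<Phi> where "\<forall>\<rho>. poly Z \<rho> = 0 \<longrightarrow>
          poly (Z + (Z1 - Z)) (\<Phi> \<rho>) = 0 \<and> order (\<Phi> \<rho>) (Z + (Z1 - Z)) = 1 \<and> dist (\<Phi> \<rho>) \<rho> < \<tau>"
        and "\<forall>w\<in>cball 0 R. poly (Z + (Z1 - Z)) w = 0 \<longrightarrow> w \<in> \<Phi> ` {\<rho>. poly Z \<rho> = 0}"
        using \<delta>[OF small] by blast
      ultimately show "root_config Z1 s t (r + 2) 0"
        using root_config_tracked[OF rc, of Z1 R \<tau> \<Phi>] \<tau>_bounds separated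
        by (auto simp: D_def)
    qed
  qed
  then show ?thesis
    by blast
qed

lemma ssc_V_perturbation_small:
  fixes A B :: "complex poly" and R \<delta> :: real
  assumes "0 < \<delta>"
  shows "\<exists>c>0. \<forall>e z. norm e < c \<longrightarrow> z \<in> cball 0 R \<longrightarrow>
    norm (poly (smult (e + cnj e + e * cnj e) A + smult (e * cnj e) B) z) \<le> \<delta> \<and>
    norm (poly (pderiv (smult (e + cnj e + e * cnj e) A + smult (e * cnj e) B)) z) \<le> \<delta>"
proof -
  obtain MA MB MA' MB' where M: "0 < MA" "0 < MB" "0 < MA'" "0 < MB'"
    and bounds: "\<And>z. norm z \<le> R \<Longrightarrow> norm (poly A z) \<le> MA \<and> norm (poly B z) \<le> MB
      \<and> norm (poly (pderiv A) z) \<le> MA' \<and> norm (poly (pderiv B) z) \<le> MB'"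
    using poly_bound_exists[of R A] poly_bound_exists[of R B]
      poly_bound_exists[of R "pderiv A"] poly_bound_exists[of R "pderiv B"]
    by metis
  define M where "M = MA + MB + MA' + MB' + 1"
  have "0 < M"
    using M by (simp add: M_def)
  define c where "c = min 1 (\<delta> / (4 * M))"
  have small: "norm (a * x + b * y) \<le> \<delta>"
    if "norm e < c" "a = e + cnj e + e * cnj e" "b = e * cnj e" "norm x \<le> M" "norm y \<le> M"
    for e a b x y :: complex
  proof -
    have e: "norm e \<le> 1" "norm e * (4 * M) \<le> \<delta>"
      using that(1) \<open>0 < M\<close> by (auto simp: c_def field_simps)
    have "norm b \<le> norm e"
      using norm_V_coeffs(2)[OF e(1)] mult_left_le[OF e(1) norm_ge_zero] that(3)
      by (simp add: power2_eq_square)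
    then have "norm (a * x + b * y) \<le> 3 * norm e * M + norm e * M"
      using norm_V_coeffs(1)[OF e(1)] that(2,4,5) norm_triangle_ineq[of "a * x" "b * y"]
      by (smt (verit, best) mult_mono norm_ge_zero norm_mult)
    with e(2) show ?thesis
      by (simp add: algebra_simps)
  qed
  have "0 < c"
    using assms \<open>0 < M\<close> by (simp add: c_def)
  moreover have "norm (poly (smult (e + cnj e + e * cnj e) A + smult (e * cnj e) B) z) \<le> \<delta> \<and>
      norm (poly (pderiv (smult (e + cnj e + e * cnj e) A + smult (e * cnj e) B)) z) \<le> \<delta>"
    if "norm e < c" "z \<in> cball 0 R" for e z
  proof -
    have "norm (poly A z) \<le> M" "norm (poly B z) \<le> M" "norm (poly (pderiv A) z) \<le> M"
      "norm (poly (pderiv B) z) \<le> M"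
      using bounds[of z] that(2) M by (auto simp: M_def)
    then show ?thesis
      using small[OF that(1) refl refl] by (simp add: pderiv_add pderiv_smult)
  qed
  ultimately show ?thesis
    by blast
qed

lemma ssc_quad_cofactor:
  fixes Y Z Z1 :: "complex poly"
  assumes Y: "Y = [:0, 1:] ^ m * Z" and "Y \<noteq> 0" and real: "\<And>n. coeff Y n \<in> \<real>"
    and "a \<in> \<real>" "b \<in> \<real>" "b \<noteq> 0" and Y1: "ssc_quad Y a b = [:0, 1:] ^ m * Z1"
  shows "degree Z1 = degree Z + 2" and "\<And>z. poly Z1 z = 0 \<Longrightarrow> poly Z1 (cnj z) = 0"
proof -
  have "degree (ssc_quad Y a b) = degree Y + 2"
    using degree_ssc_quad[OF \<open>Y \<noteq> 0\<close> \<open>b \<noteq> 0\<close>] .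
  moreover from this have "Z1 \<noteq> 0"
    using Y1 by auto
  moreover have "Z \<noteq> 0"
    using \<open>Y \<noteq> 0\<close> Y by auto
  ultimately show "degree Z1 = degree Z + 2"
    unfolding Y1 by (simp add: Y degree_mult_eq degree_linear_power)
  fix z assume "poly Z1 z = 0"
  have "coeff (ssc_quad Y a b) n \<in> \<real>" for n
    using real \<open>a \<in> \<real>\<close> \<open>b \<in> \<real>\<close> by (rule real_coeffs_ssc_quad)
  with \<open>poly Z1 z = 0\<close> have "poly (ssc_quad Y a b) (cnj z) = 0"
    using real_poly_cnj_root_iff[of "ssc_quad Y a b" z] by (simp add: Y1)
  then show "poly Z1 (cnj z) = 0"
    using \<open>poly Z1 z = 0\<close> by (cases "z = 0") (auto simp: Y1 poly_power)
qed

lemma root_config_ssc_V: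
  fixes Y :: "complex poly" and \<sigma> :: real
  assumes real: "\<And>n. coeff Y n \<in> \<real>" and rc: "root_config Y s t r m" and "0 < \<sigma>"
  shows "\<exists>\<delta>>0. \<forall>e. e \<noteq> 0 \<longrightarrow> \<sigma> * norm e \<le> \<bar>Im e\<bar> \<longrightarrow> norm e < \<delta> \<longrightarrow>
    root_config (ssc_quad Y (e + cnj e + e * cnj e) (e * cnj e)) s t (r + 2) m"
proof -
  have "Y \<noteq> 0" "order 0 Y = m"
    using rc by (simp_all add: root_config_def)
  then obtain Z where Y: "Y = [:0, 1:] ^ m * Z"
    using order_decomp[of Y 0] by auto
  then have rc_Z: "root_config Z s t r 0"
    using rc root_config_monom_mult by simp
  define A where "A = exp_euler1 Z + of_nat m * Z"
  define B where "B = exp_euler2 Z + 2 * of_nat m * exp_euler1 Z + of_nat m * (of_nat m - 1) * Z"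
  have factor: "ssc_quad Y a b = [:0, 1:] ^ m * (Z + (smult a A + smult b B))" for a b
    using ssc_quad_monom_mult[of m Z a b] by (simp add: Y A_def B_def add.assoc)
  obtain R1 c1 where "0 < c1" and no_large_real_roots: "\<And>e x. e \<noteq> 0 \<Longrightarrow> \<sigma> * norm e \<le> \<bar>Im e\<bar> \<Longrightarrow>
      norm e < c1 \<Longrightarrow> R1 \<le> \<bar>x\<bar> \<Longrightarrow> poly (ssc_quad Y (e + cnj e + e * cnj e) (e * cnj e)) (of_real x) \<noteq> 0"
    using ssc_V_no_large_real_roots[OF \<open>Y \<noteq> 0\<close> \<open>0 < \<sigma>\<close>] by blast
  obtain R0 where R0: "\<forall>R\<ge>R0. \<exists>\<delta>>0. \<forall>Z1.
    (\<forall>z\<in>cball 0 R. norm (poly (Z1 - Z) z) \<le> \<delta> \<and> norm (poly (pderiv (Z1 - Z)) z) \<le> \<delta>) \<longrightarrow>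
    degree Z1 = degree Z + 2 \<longrightarrow> (\<forall>z. poly Z1 z = 0 \<longrightarrow> poly Z1 (cnj z) = 0) \<longrightarrow>
    (\<forall>x. R < \<bar>x\<bar> \<longrightarrow> poly Z1 (of_real x) \<noteq> 0) \<longrightarrow> root_config Z1 s t (r + 2) 0"
    using root_config_perturb[OF rc_Z] by blast
  define R where "R = max R0 R1"
  have "R0 \<le> R"
    by (simp add: R_def)
  then obtain \<delta>0 where "0 < \<delta>0" and perturb: "\<And>Z1.
    (\<forall>z\<in>cball 0 R. norm (poly (Z1 - Z) z) \<le> \<delta>0 \<and> norm (poly (pderiv (Z1 - Z)) z) \<le> \<delta>0) \<Longrightarrow>
    degree Z1 = degree Z + 2 \<Longrightarrow> (\<forall>z. poly Z1 z = 0 \<longrightarrow> poly Z1 (cnj z) = 0) \<Longrightarrow>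
    (\<forall>x. R < \<bar>x\<bar> \<longrightarrow> poly Z1 (of_real x) \<noteq> 0) \<Longrightarrow> root_config Z1 s t (r + 2) 0"
    using R0 by blast
  obtain c2 where "0 < c2" and small: "\<And>e z. norm e < c2 \<Longrightarrow> z \<in> cball 0 R \<Longrightarrow>
      norm (poly (smult (e + cnj e + e * cnj e) A + smult (e * cnj e) B) z) \<le> \<delta>0 \<and>
      norm (poly (pderiv (smult (e + cnj e + e * cnj e) A + smult (e * cnj e) B)) z) \<le> \<delta>0"
    using ssc_V_perturbation_small[OF \<open>0 < \<delta>0\<close>, of R A B] by blast
  have "root_config (ssc_quad Y (e + cnj e + e * cnj e) (e * cnj e)) s t (r + 2) m"
    if "e \<noteq> 0" "\<sigma> * norm e \<le> \<bar>Im e\<bar>" "norm e < min c1 c2" for e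
  proof -
    define a where "a = e + cnj e + e * cnj e"
    define b where "b = e * cnj e"
    define Z1 where "Z1 = Z + (smult a A + smult b B)"
    have Y1: "ssc_quad Y a b = [:0, 1:] ^ m * Z1"
      by (simp add: factor Z1_def)
    have "b \<noteq> 0"
      using that(1) by (simp add: b_def)
    have "a \<in> \<real>" "b \<in> \<real>"
      by (simp_all add: a_def b_def complex_add_cnj complex_norm_square[symmetric])
    note cofactor = ssc_quad_cofactor[OF Y \<open>Y \<noteq> 0\<close> real this \<open>b \<noteq> 0\<close> Y1]
    have "degree Z1 = degree Z + 2" "\<forall>z. poly Z1 z = 0 \<longrightarrow> poly Z1 (cnj z) = 0"
      using cofactor by blast+
    moreover have "\<forall>x. R < \<bar>x\<bar> \<longrightarrow> poly Z1 (of_real x) \<noteq> 0"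
    proof (intro allI impI)
      fix x assume "R < \<bar>x\<bar>"
      then have "poly (ssc_quad Y a b) (of_real x) \<noteq> 0"
        using no_large_real_roots[OF that(1,2)] that(3) by (simp add: R_def a_def b_def)
      then show "poly Z1 (of_real x) \<noteq> 0"
        by (simp add: Y1)
    qed
    moreover have "\<forall>z\<in>cball 0 R. norm (poly (Z1 - Z) z) \<le> \<delta>0 \<and> norm (poly (pderiv (Z1 - Z)) z) \<le> \<delta>0"
      using small[of e] that(3) by (simp add: Z1_def a_def b_def)
    ultimately have "root_config Z1 s t (r + 2) 0"
      by (intro perturb)
    then show ?thesis
      using root_config_monom_mult Y1 by (simp add: a_def b_def)
  qed
  moreover have "0 < min c1 c2"
    using \<open>0 < c1\<close> \<open>0 < c2\<close> by simp
  ultimately show ?thesis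
    by blast
qed

theorem lemma5p2:
  fixes \<alpha> \<beta> :: real and S :: "complex set"
  assumes S_def: "S = open_sector \<alpha> \<beta>"
    and ab: "\<alpha> < \<beta>"
    and clos: "closure S \<inter> \<real> = {0}"
  shows
    "(\<forall>e\<in>S. ssc (\<lambda>x. exp x * (1 + e * x)) (\<lambda>x. exp x * (1 + cnj e * x))
               = (\<lambda>x. exp x * poly (Vpoly e) x))
     \<and> (\<forall>e\<in>S. \<forall>(Y::complex poly) p. Y \<noteq> 0 \<and> degree Y = p \<longrightarrow>
          (\<exists>Y1. ssc (\<lambda>x. exp x * poly Y x) (\<lambda>x. exp x * poly (Vpoly e) x)
                  = (\<lambda>x. exp x * poly Y1 x) \<and> degree Y1 = p + 2))
     \<and> (\<forall>(Y::real poly) p s t r. Y \<noteq> 0 \<and> degree Y = p \<and>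
          root_config (map_poly complex_of_real Y) s t r (p - s - t - r) \<longrightarrow>
          (\<exists>\<delta>>0. \<forall>e\<in>S. norm e < \<delta> \<longrightarrow>
             (\<forall>Y1. ssc (\<lambda>x. exp x * poly (map_poly complex_of_real Y) x)
                       (\<lambda>x. exp x * poly (Vpoly e) x) = (\<lambda>x. exp x * poly Y1 x) \<longrightarrow>
                    root_config Y1 s t (r + 2) (p - s - t - r))))"
proof (intro conjI ballI allI impI)
  obtain \<sigma> where "0 < \<sigma>" and \<sigma>: "\<And>e. e \<in> S \<Longrightarrow> e \<noteq> 0 \<and> \<sigma> * norm e \<le> \<bar>Im e\<bar>"
    using open_sector_Im_bound[OF ab clos[unfolded S_def]] S_def by blast
  have ssc_V: "ssc (\<lambda>x. exp x * poly Y x) (\<lambda>x. exp x * poly (Vpoly e) x)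
      = (\<lambda>x. exp x * poly (ssc_quad Y (e + cnj e + e * cnj e) (e * cnj e)) x)" for Y e
    unfolding Vpoly_def by (rule ssc_exp_quad)
  show "ssc (\<lambda>x. exp x * (1 + e * x)) (\<lambda>x. exp x * (1 + cnj e * x))
      = (\<lambda>x. exp x * poly (Vpoly e) x)" for e
    unfolding Vpoly_def by (rule ssc_exp_linear)
  show "\<exists>Y1. ssc (\<lambda>x. exp x * poly Y x) (\<lambda>x. exp x * poly (Vpoly e) x)
      = (\<lambda>x. exp x * poly Y1 x) \<and> degree Y1 = p + 2"
    if "e \<in> S" "Y \<noteq> 0 \<and> degree Y = p" for e Y p
    using ssc_V degree_ssc_quad[of Y "e * cnj e"] \<sigma>[OF that(1)] that(2) by auto
  fix Y :: "real poly" and p s t r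
  assume "Y \<noteq> 0 \<and> degree Y = p \<and> root_config (map_poly complex_of_real Y) s t r (p - s - t - r)"
  then obtain \<delta> where "0 < \<delta>" and \<delta>: "\<And>e. e \<noteq> 0 \<Longrightarrow> \<sigma> * norm e \<le> \<bar>Im e\<bar> \<Longrightarrow> norm e < \<delta> \<Longrightarrow>
      root_config (ssc_quad (map_poly complex_of_real Y) (e + cnj e + e * cnj e) (e * cnj e))
        s t (r + 2) (p - s - t - r)"
    using root_config_ssc_V[OF _ _ \<open>0 < \<sigma>\<close>] by (metis Reals_of_real coeff_map_poly of_real_0)
  show "\<exists>\<delta>>0. \<forall>e\<in>S. norm e < \<delta> \<longrightarrow>
      (\<forall>Y1. ssc (\<lambda>x. exp x * poly (map_poly complex_of_real Y) x) (\<lambda>x. exp x * poly (Vpoly e) x)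
          = (\<lambda>x. exp x * poly Y1 x) \<longrightarrow> root_config Y1 s t (r + 2) (p - s - t - r))"
    using \<open>0 < \<delta>\<close> \<delta> \<sigma> by (auto simp: ssc_V exp_poly_eq_iff)
qed

end
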